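(* Let $\mathbf{S}$ be the bi-infinite matrix produced by the construction in the context. Then: (i) there exists $C>0$ such that for all $f\in L^2(\mathbb{R})$, $\int_{\mathbb{R}^2}f(x)\,\Phi(x)^T\mathbf{S}\,\Phi(y)\,f(y)\,dx\,dy\le C\|f\|_{L^2}^2$; (ii) for all $f\in L^2(\mathbb{R})$, \[2^j\int_{\mathbb{R}^2}f(x)\,\Phi(2^jx)^T\mathbf{S}\,\Phi(2^jy)\,f(y)\,dx\,dy\longrightarrow\begin{cases}0,& j\to-\infty,\\ \|f\|_{L^2}^2,& j\to+\infty.\end{cases}\]
   Context: Fix $n\in\mathbb{N}$, $h_\ell,h_r>0$, and the mesh $\mathbf{t}(k)=kh_\ell$ for $k<0$, $\mathbf{t}(k)=kh_r$ for $k\ge0$. Let $\mathbf{P}$ be the bi-infinite matrix with $\mathbf{P}(2k,k)=1$; for each $k$, $\mathbf{P}(2k+1,j)$, $j=k-n+1,\dots,k+n$, the unique numbers with $\sum_{j=k-n+1}^{k+n}\mathbf{P}(2k+1,j)\mathbf{t}(j)^\alpha=(\mathbf{t}(2k+1)/2)^\alpha$, $\alpha=0,\dots,2n-1$; all other entries $0$ (semi-regular Dubuc–Deslauriers $2n$-point scheme). This scheme is convergent: for each $k\in\mathbb{Z}$ there is a continuous compactly supported $\varphi_k$, the uniform limit of the piecewise linear interpolants of $(2^{-j}\mathbf{t}(m),(\mathbf{P}^j\delta_k)(m))_{m\in\mathbb{Z}}$. Standing assumption: $\int_{\mathbb{R}}\varphi_k>0$ for all $k$. Let $\mathbf{D}=\mathrm{diag}(\int_{\mathbb{R}}\varphi_k)_{k\in\mathbb{Z}}$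 and $\Phi=[\phi_k:k\in\mathbb{Z}]=\mathbf{D}^{-1/2}[\varphi_k:k\in\mathbb{Z}]$ (column vector of scaling functions), with $\Phi(x)^T\mathbf{S}\Phi(y)=\sum_{k,m}\phi_k(x)\mathbf{S}(k,m)\phi_m(y)$. For $\alpha\in\{0,\dots,2n-1\}$ let $\mathbf{c}_\alpha=\mathbf{D}^{1/2}\mathbf{t}^\alpha$, i.e. $\mathbf{c}_\alpha(k)=\sqrt{\int_{\mathbb{R}}\varphi_k}\;\mathbf{t}(k)^\alpha$. Let $\mathcal{I}_{irr}=\{2-2n,\dots,2n-2\}$ ($4n-3$ indices). Construction of $\mathbf{S}$: (1) let $\mathbf{C}$ be the $(4n-3)\times n$ matrix whose $(\alpha+1)$-th column is $[\mathbf{c}_\alpha(k)]_{k\in\mathcal{I}_{irr}}$, $\alpha=0,\dots,n-1$; (2) compute a QR factorization $\mathbf{C}=\mathbf{O}\mathbf{U}$ with $\mathbf{O}$ a $(4n-3)\times(4n-3)$ orthogonal matrix and $\mathbf{U}$ a $(4n-3)\times n$ upper triangular matrix; (3) let $\mathbf{S}$ be the bi-infinite identity matrix, and if $h_\ell\ne h_r$ replace its block $[\mathbf{S}(k,m)]_{k,m\in\mathcal{I}_{irr}}$ by $\widetilde{\mathbf{O}}\widetilde{\mathbf{O}}^T$, where $\widetilde{\mathbf{O}}$ consists of the first $n$ columns of $\mathbf{O}$. *)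

theory Defs
  imports "HOL-Analysis.Analysis"
begin

definition mesh :: "real \<Rightarrow> real \<Rightarrow> int \<Rightarrow> real" where
  "mesh hl hr k = (if k < 0 then real_of_int k * hl else real_of_int k * hr)"

definition DD_P :: "nat \<Rightarrow> real \<Rightarrow> real \<Rightarrow> int \<Rightarrow> int \<Rightarrow> real" where
  "DD_P n hl hr i j =
     (if even i then (if j = i div 2 then 1 else 0)
      else (let k = i div 2 in
             (THE w :: int \<Rightarrow> real.
                (\<forall>j'. j' \<notin> {k - int n + 1 .. k + int n} \<longrightarrow> w j' = 0) \<and>
                (\<forall>\<alpha> < 2 * n.
                   (\<Sum>j'\<in>{k - int n + 1 .. k + int n}. w j' * mesh hl hr j' ^ \<alpha>)
                   = (mesh hl hr (2 * k + 1) / 2) ^ \<alpha>)) j))"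

text \<open>Application of P to a bi-infinite vector.  Row i of P has its
  nonzero entries among the columns {i div 2 - n + 1 .. i div 2 + n},
  so this finite sum is exactly the matrix-vector product (P v)(i).\<close>
definition DD_apply :: "nat \<Rightarrow> real \<Rightarrow> real \<Rightarrow> (int \<Rightarrow> real) \<Rightarrow> int \<Rightarrow> real" where
  "DD_apply n hl hr v i =
     (\<Sum>j\<in>{i div 2 - int n + 1 .. i div 2 + int n}. DD_P n hl hr i j * v j)"

definition DD_iter :: "nat \<Rightarrow> real \<Rightarrow> real \<Rightarrow> nat \<Rightarrow> int \<Rightarrow> int \<Rightarrow> real" where
  "DD_iter n hl hr j k = (DD_apply n hl hr ^^ j) (\<lambda>m. if m = k then 1 else 0)"

text \<open>Piecewise linear interpolant of the points (s m, c m), m in Z,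
  for a strictly increasing unbounded node sequence s.\<close>
definition pl_interp :: "(int \<Rightarrow> real) \<Rightarrow> (int \<Rightarrow> real) \<Rightarrow> real \<Rightarrow> real" where
  "pl_interp s c x =
     (let m = (THE m. s m \<le> x \<and> x < s (m + 1))
      in c m + (c (m + 1) - c m) * (x - s m) / (s (m + 1) - s m))"

definition DD_interp :: "nat \<Rightarrow> real \<Rightarrow> real \<Rightarrow> nat \<Rightarrow> int \<Rightarrow> real \<Rightarrow> real" where
  "DD_interp n hl hr j k =
     pl_interp (\<lambda>m. mesh hl hr m / 2 ^ j) (DD_iter n hl hr j k)"

definition DD_convergent :: "nat \<Rightarrow> real \<Rightarrow> real \<Rightarrow> bool" where
  "DD_convergent n hl hr \<longleftrightarrow>
     (\<forall>k. \<exists>g. continuous_on UNIV g \<and> (\<exists>a b. \<forall>x. x \<notin> {a..b} \<longrightarrow> g x = 0) \<and>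
           uniform_limit UNIV (\<lambda>j. DD_interp n hl hr j k) g sequentially)"

text \<open>The basic limit function varphi_k (pointwise limit; equals the uniform limit
  whenever the scheme converges).\<close>
definition DD_varphi :: "nat \<Rightarrow> real \<Rightarrow> real \<Rightarrow> int \<Rightarrow> real \<Rightarrow> real" where
  "DD_varphi n hl hr k x = lim (\<lambda>j. DD_interp n hl hr j k x)"

definition DD_D :: "nat \<Rightarrow> real \<Rightarrow> real \<Rightarrow> int \<Rightarrow> real" where
  "DD_D n hl hr k = (LINT x|lborel. DD_varphi n hl hr k x)"

definition DD_phi :: "nat \<Rightarrow> real \<Rightarrow> real \<Rightarrow> int \<Rightarrow> real \<Rightarrow> real" where
  "DD_phi n hl hr k x = DD_varphi n hl hr k x / sqrt (DD_D n hl hr k)"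

definition irr_idx :: "nat \<Rightarrow> nat \<Rightarrow> int" where
  "irr_idx n i = 2 - 2 * int n + int i"

definition irr_set :: "nat \<Rightarrow> int set" where
  "irr_set n = {2 - 2 * int n .. 2 * int n - 2}"

definition DD_c :: "nat \<Rightarrow> real \<Rightarrow> real \<Rightarrow> nat \<Rightarrow> int \<Rightarrow> real" where
  "DD_c n hl hr \<alpha> k = sqrt (DD_D n hl hr k) * mesh hl hr k ^ \<alpha>"

definition DD_C :: "nat \<Rightarrow> real \<Rightarrow> real \<Rightarrow> nat \<Rightarrow> nat \<Rightarrow> real" where
  "DD_C n hl hr i \<alpha> = DD_c n hl hr \<alpha> (irr_idx n i)"

text \<open>QR factorization C = Q U, with Q an N x N orthogonal matrix and U an
  N x n upper triangular matrix, N = 4n-3 (matrices as functions on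
  0-based index pairs; only entries within the bounds matter).\<close>
definition is_QR :: "nat \<Rightarrow> real \<Rightarrow> real \<Rightarrow> (nat \<Rightarrow> nat \<Rightarrow> real) \<Rightarrow> (nat \<Rightarrow> nat \<Rightarrow> real) \<Rightarrow> bool" where
  "is_QR n hl hr Q U \<longleftrightarrow>
     (let N = 4 * n - 3 in
       (\<forall>i<N. \<forall>j<N. (\<Sum>l<N. Q l i * Q l j) = (if i = j then 1 else 0)) \<and>
       (\<forall>i<N. \<forall>j<N. (\<Sum>l<N. Q i l * Q j l) = (if i = j then 1 else 0)) \<and>
       (\<forall>i<N. \<forall>\<alpha><n. \<alpha> < i \<longrightarrow> U i \<alpha> = 0) \<and>
       (\<forall>i<N. \<forall>\<alpha><n. DD_C n hl hr i \<alpha> = (\<Sum>l<N. Q i l * U l \<alpha>)))"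

definition DD_S :: "nat \<Rightarrow> real \<Rightarrow> real \<Rightarrow> (nat \<Rightarrow> nat \<Rightarrow> real) \<Rightarrow> int \<Rightarrow> int \<Rightarrow> real" where
  "DD_S n hl hr Q k m =
     (if hl \<noteq> hr \<and> k \<in> irr_set n \<and> m \<in> irr_set n
      then (\<Sum>l<n. Q (nat (k - (2 - 2 * int n))) l * Q (nat (m - (2 - 2 * int n))) l)
      else (if k = m then 1 else 0))"

definition DD_kernel :: "nat \<Rightarrow> real \<Rightarrow> real \<Rightarrow> (nat \<Rightarrow> nat \<Rightarrow> real) \<Rightarrow> real \<Rightarrow> real \<Rightarrow> real" where
  "DD_kernel n hl hr Q x y =
     (\<Sum>\<^sub>\<infinity>(k, m)\<in>UNIV. DD_phi n hl hr k x * DD_S n hl hr Q k m * DD_phi n hl hr m y)"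

definition DD_form :: "nat \<Rightarrow> real \<Rightarrow> real \<Rightarrow> (nat \<Rightarrow> nat \<Rightarrow> real) \<Rightarrow> int \<Rightarrow> (real \<Rightarrow> real) \<Rightarrow> real" where
  "DD_form n hl hr Q j f =
     2 powr (real_of_int j) *
     (\<integral>p. f (fst p) * DD_kernel n hl hr Q (2 powr (real_of_int j) * fst p)
                                        (2 powr (real_of_int j) * snd p) * f (snd p)
        \<partial>(lborel \<Otimes>\<^sub>M lborel))"

definition L2 :: "(real \<Rightarrow> real) set" where
  "L2 = {f. f \<in> borel_measurable lborel \<and> integrable lborel (\<lambda>x. (f x)\<^sup>2)}"

definition L2_norm_sq :: "(real \<Rightarrow> real) \<Rightarrow> real" where
  "L2_norm_sq f = (LINT x|lborel. (f x)\<^sup>2)"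

end

(* The kernel K(x,y) = Phi(x)^T S Phi(y) is bounded, vanishes for |x - y| > r, and each of its
   rows integrates to 1: the normalised scaling functions phi_k = varphi_k / sqrt(D_k) integrate to
   sqrt(D_k), S fixes the vector (sqrt(D_k))_k, and the varphi_k form a partition of unity.

   For any such kernel the dilated forms a * int int f(x) K(ax, ay) f(y) are bounded by
   2 B r ||f||^2 uniformly in a, so limits may be computed on dense classes of functions.  As
   a -> 0 a bounded function of bounded support has a form of order a.  As a -> infinity the form
   differs from ||f||^2 by a * int int f(x) K(ax, ay) (f(y) - f(x)), which is controlled by the
   L^2 modulus of continuity of f at scale r/a; this modulus tends to 0 for every f in L^2, by
   approximation with simple functions and, for indicators of sets, by inner and outer regularity
   of Lebesgue measure.  Taking a = 2^j gives the proposition. *)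

theory Submission
  imports Defs "HOL-Computational_Algebra.Polynomial" "HOL-Real_Asymp.Real_Asymp"
begin

section \<open>Square-integrable functions\<close>

lemma L2_iff: "f \<in> L2 \<longleftrightarrow> f \<in> borel_measurable borel \<and> integrable lborel (\<lambda>x. (f x)\<^sup>2)"
  by (simp add: L2_def measurable_lborel2)

lemma L2_borel_measurable [measurable_dest]: "f \<in> L2 \<Longrightarrow> f \<in> borel_measurable borel"
  by (simp add: L2_iff)

lemma L2_integrable_square: "f \<in> L2 \<Longrightarrow> integrable lborel (\<lambda>x. (f x)\<^sup>2)"
  by (simp add: L2_iff)

lemma L2_norm_sq_nonneg: "L2_norm_sq f \<ge> 0"
  unfolding L2_norm_sq_def by simp

lemma abs_mult_le_sum_squares: "\<bar>a * b\<bar> \<le> (a\<^sup>2 + b\<^sup>2) / 2" for a b :: real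
proof -
  have "0 \<le> (\<bar>a\<bar> - \<bar>b\<bar>)\<^sup>2" by simp
  then show ?thesis by (simp add: power2_diff abs_mult)
qed

lemma abs_mult_le_weighted_squares: "\<bar>a * b\<bar> \<le> (t\<^sup>2 * a\<^sup>2 + b\<^sup>2 / t\<^sup>2) / 2" if "t > 0" for a b t :: real
  using abs_mult_le_sum_squares[of "t * a" "b / t"] that
  by (simp add: abs_mult power_mult_distrib power_divide)

lemma square_sum_le: "(a + b)\<^sup>2 \<le> 2 * (a\<^sup>2 + b\<^sup>2)" for a b :: real
  using abs_mult_le_sum_squares[of a b] by (simp add: power2_sum)

lemma square_sum_diff_le: "(a + b - c)\<^sup>2 \<le> 3 * (a\<^sup>2 + b\<^sup>2 + c\<^sup>2)" for a b c :: real
proof -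
  have "0 \<le> (a - b)\<^sup>2 + (a + c)\<^sup>2 + (b + c)\<^sup>2" by simp
  then show ?thesis by (simp add: power2_diff power2_sum algebra_simps)
qed

lemma L2_integrable_mult:
  assumes "f \<in> L2" "g \<in> L2"
  shows "integrable lborel (\<lambda>x. f x * g x)"
proof (rule Bochner_Integration.integrable_bound)
  show "integrable lborel (\<lambda>x. (f x)\<^sup>2 + (g x)\<^sup>2)"
    using assms by (auto simp: L2_iff)
  show "(\<lambda>x. f x * g x) \<in> borel_measurable lborel"
    using assms by measurable
  show "AE x in lborel. norm (f x * g x) \<le> norm ((f x)\<^sup>2 + (g x)\<^sup>2)"
  proof (intro always_eventually allI)
    fix x
    have "\<bar>f x * g x\<bar> \<le> (f x)\<^sup>2 + (g x)\<^sup>2"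
      using abs_mult_le_sum_squares[of "f x" "g x"] by (simp add: add_nonneg_nonneg)
    then show "norm (f x * g x) \<le> norm ((f x)\<^sup>2 + (g x)\<^sup>2)" by simp
  qed
qed

lemma L2_add: "f \<in> L2 \<Longrightarrow> g \<in> L2 \<Longrightarrow> (\<lambda>x. f x + g x) \<in> L2"
  using L2_integrable_mult[of f g] unfolding L2_iff power2_sum by (auto simp: mult.assoc)

lemma L2_cmult: "f \<in> L2 \<Longrightarrow> (\<lambda>x. c * f x) \<in> L2"
  unfolding L2_iff power_mult_distrib by auto

lemma L2_diff: "f \<in> L2 \<Longrightarrow> g \<in> L2 \<Longrightarrow> (\<lambda>x. f x - g x) \<in> L2"
  using L2_add[of f "\<lambda>x. (-1) * g x"] L2_cmult[of g "-1"] by simp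

lemma L2_zero: "(\<lambda>x. 0) \<in> L2"
  by (simp add: L2_iff)

lemma integral_translate: "(LINT x|lborel. g (x + h)) = (LINT x|lborel. g x)" for g :: "real \<Rightarrow> real"
  using lborel_integral_real_affine[of 1 g h] by (simp add: add.commute)

lemma L2_translate: "f \<in> L2 \<Longrightarrow> (\<lambda>x. f (x + h)) \<in> L2"
  using lborel_integrable_real_affine[of "\<lambda>x. (f x)\<^sup>2" 1 h] unfolding L2_iff
  by (auto simp: add.commute)

lemma L2_norm_sq_translate: "L2_norm_sq (\<lambda>x. f (x + h)) = L2_norm_sq f"
  unfolding L2_norm_sq_def by (rule integral_translate)

lemma L2_dominated:
  assumes f: "f \<in> L2" and g: "g \<in> borel_measurable borel" and dom: "\<And>x. \<bar>g x\<bar> \<le> C * \<bar>f x\<bar>"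
  shows "g \<in> L2"
proof -
  have square: "(g x)\<^sup>2 \<le> C\<^sup>2 * (f x)\<^sup>2" for x
  proof -
    have "C * \<bar>f x\<bar> \<le> \<bar>C\<bar> * \<bar>f x\<bar>"
      by (intro mult_right_mono) auto
    then have "\<bar>g x\<bar> \<le> \<bar>C\<bar> * \<bar>f x\<bar>"
      using dom[of x] by linarith
    then have "\<bar>g x\<bar>\<^sup>2 \<le> (\<bar>C\<bar> * \<bar>f x\<bar>)\<^sup>2"
      by (rule power_mono) simp
    then show ?thesis by (simp add: power_mult_distrib)
  qed
  have "integrable lborel (\<lambda>x. (g x)\<^sup>2)"
  proof (rule Bochner_Integration.integrable_bound)
    show "integrable lborel (\<lambda>x. C\<^sup>2 * (f x)\<^sup>2)"
      using L2_integrable_square[OF f] by simp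
    show "(\<lambda>x. (g x)\<^sup>2) \<in> borel_measurable lborel"
      using g by measurable
    show "AE x in lborel. norm ((g x)\<^sup>2) \<le> norm (C\<^sup>2 * (f x)\<^sup>2)"
      using square by (intro always_eventually allI) simp
  qed
  then show ?thesis using g by (simp add: L2_iff)
qed

lemma L2_mult_bounded:
  assumes "f \<in> L2" "g \<in> borel_measurable borel" "\<And>x. \<bar>g x\<bar> \<le> 1"
  shows "(\<lambda>x. f x * g x) \<in> L2"
proof (rule L2_dominated[OF assms(1), where C = 1])
  show "(\<lambda>x. f x * g x) \<in> borel_measurable borel"
    using assms by measurable
  show "\<bar>f x * g x\<bar> \<le> 1 * \<bar>f x\<bar>" for x
    using assms(3)[of x] by (simp add: abs_mult mult_left_le)
qed

lemma L2_dominated_convergence: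
  assumes f: "f \<in> L2" and g: "\<And>i. g i \<in> borel_measurable borel"
    and lim: "\<And>x. (\<lambda>i. g i x) \<longlonglongrightarrow> f x" and dom: "\<And>i x. \<bar>g i x\<bar> \<le> C * \<bar>f x\<bar>"
  shows "(\<lambda>i. L2_norm_sq (\<lambda>x. f x - g i x)) \<longlonglongrightarrow> 0"
proof -
  have [measurable]: "f \<in> borel_measurable borel" "g i \<in> borel_measurable borel" for i
    using f g by (auto simp: L2_iff)
  have "(\<lambda>i. LINT x|lborel. (f x - g i x)\<^sup>2) \<longlonglongrightarrow> (LINT (x::real)|lborel. (0::real))"
  proof (rule Bochner_Integration.integral_dominated_convergence[where w="\<lambda>x. (1 + \<bar>C\<bar>)\<^sup>2 * (f x)\<^sup>2"
        and s="\<lambda>i x. (f x - g i x)\<^sup>2" and f="\<lambda>x. 0"])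
    show "integrable lborel (\<lambda>x. (1 + \<bar>C\<bar>)\<^sup>2 * (f x)\<^sup>2)"
      using L2_integrable_square[OF f] by simp
    show "AE x in lborel. (\<lambda>i. (f x - g i x)\<^sup>2) \<longlonglongrightarrow> 0"
    proof (intro always_eventually allI)
      fix x
      have "(\<lambda>i. (f x - g i x)\<^sup>2) \<longlonglongrightarrow> (f x - f x)\<^sup>2"
        by (intro tendsto_intros lim)
      then show "(\<lambda>i. (f x - g i x)\<^sup>2) \<longlonglongrightarrow> 0" by simp
    qed
    show "AE x in lborel. norm ((f x - g i x)\<^sup>2) \<le> (1 + \<bar>C\<bar>)\<^sup>2 * (f x)\<^sup>2" for i
    proof (intro always_eventually allI)
      fix x
      have "C * \<bar>f x\<bar> \<le> \<bar>C\<bar> * \<bar>f x\<bar>"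
        by (intro mult_right_mono) auto
      then have "\<bar>f x - g i x\<bar> \<le> (1 + \<bar>C\<bar>) * \<bar>f x\<bar>"
        using dom[of i x] by (simp add: distrib_right)
      then have "\<bar>f x - g i x\<bar>\<^sup>2 \<le> ((1 + \<bar>C\<bar>) * \<bar>f x\<bar>)\<^sup>2"
        by (rule power_mono) simp
      then show "norm ((f x - g i x)\<^sup>2) \<le> (1 + \<bar>C\<bar>)\<^sup>2 * (f x)\<^sup>2"
        by (simp add: power_mult_distrib)
    qed
  qed simp_all
  then show ?thesis by (simp add: L2_norm_sq_def)
qed

lemma L2_indicator:
  assumes "A \<in> sets borel" "emeasure lborel A < \<infinity>"
  shows "(indicator A :: real \<Rightarrow> real) \<in> L2"
proof -
  have "(\<lambda>x. (indicator A x :: real)\<^sup>2) = indicator A" by (auto simp: indicator_def)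
  then show ?thesis using assms by (simp add: L2_iff integrable_indicator_iff)
qed

lemma L2_norm_sq_le_diff:
  assumes "f \<in> L2" "g \<in> L2"
  shows "L2_norm_sq g \<le> 2 * L2_norm_sq f + 2 * L2_norm_sq (\<lambda>x. f x - g x)"
proof -
  have "(LINT x|lborel. (g x)\<^sup>2) \<le> (LINT x|lborel. 2 * (f x)\<^sup>2 + 2 * (f x - g x)\<^sup>2)"
  proof (rule integral_mono)
    fix x
    show "(g x)\<^sup>2 \<le> 2 * (f x)\<^sup>2 + 2 * (f x - g x)\<^sup>2"
      using square_sum_le[of "f x" "g x - f x"] by (simp add: power2_commute[of "g x"])
  qed (use assms L2_diff[OF assms] in \<open>auto simp: L2_iff\<close>)
  also have "\<dots> = 2 * L2_norm_sq f + 2 * L2_norm_sq (\<lambda>x. f x - g x)"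
    using assms L2_diff[OF assms] by (simp add: L2_iff L2_norm_sq_def)
  finally show ?thesis by (simp add: L2_norm_sq_def)
qed

definition L2_modulus :: "(real \<Rightarrow> real) \<Rightarrow> real \<Rightarrow> real" where
  "L2_modulus f h = (LINT x|lborel. (f (x + h) - f x)\<^sup>2)"

lemma L2_modulus_cmult: "L2_modulus (\<lambda>x. c * f x) h = c\<^sup>2 * L2_modulus f h"
  by (simp add: L2_modulus_def right_diff_distrib[symmetric] power_mult_distrib)

section \<open>Integrals over a band around the diagonal\<close>

definition band :: "real \<Rightarrow> real \<Rightarrow> real \<Rightarrow> real" where
  "band \<rho> x y = (if \<bar>x - y\<bar> \<le> \<rho> then 1 else 0)"

lemma band_eq_indicator: "band \<rho> x y = indicator {x - \<rho> .. x + \<rho>} y"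
  unfolding band_def by (auto simp: indicator_def abs_le_iff)

lemma band_commute: "band \<rho> x y = band \<rho> y x"
  unfolding band_def by (simp add: abs_minus_commute)

lemma band_nonneg: "band \<rho> x y \<ge> 0"
  unfolding band_def by auto

lemma band_measurable [measurable]:
  "(\<lambda>p. band \<rho> (fst p) (snd p)) \<in> borel_measurable (lborel \<Otimes>\<^sub>M lborel)"
  unfolding band_def by measurable

lemma integrable_band: "\<rho> \<ge> 0 \<Longrightarrow> integrable lborel (band \<rho> x)"
  unfolding band_eq_indicator[abs_def] by (intro integrable_real_indicator) auto

lemma integral_band: "\<rho> \<ge> 0 \<Longrightarrow> (LINT y|lborel. band \<rho> x y) = 2 * \<rho>"
  unfolding band_eq_indicator[abs_def] by simp

lemma
  fixes u :: "real \<Rightarrow> real"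
  assumes u: "integrable lborel u" and \<rho>: "\<rho> \<ge> 0"
  shows integrable_band_fst: "integrable (lborel \<Otimes>\<^sub>M lborel) (\<lambda>p. u (fst p) * band \<rho> (fst p) (snd p))"
    and integral_band_fst:
      "(\<integral>p. u (fst p) * band \<rho> (fst p) (snd p) \<partial>(lborel \<Otimes>\<^sub>M lborel)) = 2 * \<rho> * (LINT x|lborel. u x)"
proof -
  have [measurable]: "u \<in> borel_measurable borel"
    using borel_measurable_integrable[OF u] by (simp only: measurable_lborel2)
  show I: "integrable (lborel \<Otimes>\<^sub>M lborel) (\<lambda>p. u (fst p) * band \<rho> (fst p) (snd p))"
    using u integrable_band[OF \<rho>]
    by (intro lborel_pair.Fubini_integrable) (auto simp: abs_mult band_nonneg integral_band[OF \<rho>])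
  have "(\<integral>p. u (fst p) * band \<rho> (fst p) (snd p) \<partial>(lborel \<Otimes>\<^sub>M lborel))
      = (LINT x|lborel. LINT y|lborel. u x * band \<rho> x y)"
    using lborel_pair.integral_fst'[OF I] by simp
  also have "\<dots> = (LINT x|lborel. 2 * \<rho> * u x)"
    using integral_band[OF \<rho>] by simp
  finally show "(\<integral>p. u (fst p) * band \<rho> (fst p) (snd p) \<partial>(lborel \<Otimes>\<^sub>M lborel)) = 2 * \<rho> * (LINT x|lborel. u x)"
    by simp
qed

lemma
  fixes u :: "real \<Rightarrow> real"
  assumes u: "integrable lborel u" and \<rho>: "\<rho> \<ge> 0"
  shows integrable_band_snd: "integrable (lborel \<Otimes>\<^sub>M lborel) (\<lambda>p. u (snd p) * band \<rho> (fst p) (snd p))"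
    and integral_band_snd:
      "(\<integral>p. u (snd p) * band \<rho> (fst p) (snd p) \<partial>(lborel \<Otimes>\<^sub>M lborel)) = 2 * \<rho> * (LINT x|lborel. u x)"
proof -
  have [measurable]: "u \<in> borel_measurable borel"
    using borel_measurable_integrable[OF u] by (simp only: measurable_lborel2)
  have swap: "(\<lambda>p. u (snd p) * band \<rho> (fst p) (snd p)) = (\<lambda>(x, y). u y * band \<rho> y x)"
    by (auto simp: band_commute)
  show "integrable (lborel \<Otimes>\<^sub>M lborel) (\<lambda>p. u (snd p) * band \<rho> (fst p) (snd p))"
    unfolding swap using lborel_pair.integrable_product_swap[OF integrable_band_fst[OF u \<rho>]]
    by (simp add: case_prod_unfold)
  have "(\<integral>p. u (snd p) * band \<rho> (fst p) (snd p) \<partial>(lborel \<Otimes>\<^sub>M lborel))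
      = (\<integral>p. u (fst p) * band \<rho> (fst p) (snd p) \<partial>(lborel \<Otimes>\<^sub>M lborel))"
    unfolding swap using lborel_pair.integral_product_swap[of "\<lambda>p. u (fst p) * band \<rho> (fst p) (snd p)"]
    by (simp add: case_prod_unfold)
  then show "(\<integral>p. u (snd p) * band \<rho> (fst p) (snd p) \<partial>(lborel \<Otimes>\<^sub>M lborel)) = 2 * \<rho> * (LINT x|lborel. u x)"
    using integral_band_fst[OF u \<rho>] by simp
qed

lemma integrable_translate_mult_pair:
  fixes u v :: "real \<Rightarrow> real"
  assumes u: "integrable lborel u" and v: "integrable lborel v"
  shows "integrable (lborel \<Otimes>\<^sub>M lborel) (\<lambda>(x, h). u (x + c * h) * v h)"
proof -
  have [measurable]: "u \<in> borel_measurable borel" "v \<in> borel_measurable borel"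
    using borel_measurable_integrable[OF u] borel_measurable_integrable[OF v]
    by (simp_all only: measurable_lborel2)
  have u_translate: "integrable lborel (\<lambda>x. u (x + a))" for a
    using lborel_integrable_real_affine[OF u, of 1 a] by (simp add: add.commute)
  have inner: "(LINT x|lborel. \<bar>v h * u (x + c * h)\<bar>) = \<bar>v h\<bar> * (LINT x|lborel. \<bar>u x\<bar>)" for h
    using integral_translate[of "\<lambda>x. \<bar>u x\<bar>" "c * h"] by (simp add: abs_mult)
  have "integrable (lborel \<Otimes>\<^sub>M lborel) (\<lambda>(h, x). v h * u (x + c * h))"
    using u v u_translate by (intro lborel_pair.Fubini_integrable) (auto simp: inner)
  from lborel_pair.integrable_product_swap[OF this] show ?thesis
    by (simp add: case_prod_unfold mult.commute)
qed

lemma square_diff_le: "(a - b)\<^sup>2 \<le> 2 * a\<^sup>2 + 2 * b\<^sup>2" for a b :: real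
  using square_sum_le[of a "- b"] by simp

lemma integrable_band_square_diff:
  assumes f: "f \<in> L2" and \<rho>: "\<rho> \<ge> 0"
  shows "integrable (lborel \<Otimes>\<^sub>M lborel) (\<lambda>p. band \<rho> (fst p) (snd p) * (f (snd p) - f (fst p))\<^sup>2)"
proof (rule Bochner_Integration.integrable_bound)
  show "integrable (lborel \<Otimes>\<^sub>M lborel)
      (\<lambda>p. 2 * ((f (snd p))\<^sup>2 * band \<rho> (fst p) (snd p)) + 2 * ((f (fst p))\<^sup>2 * band \<rho> (fst p) (snd p)))"
    using integrable_band_snd[OF L2_integrable_square[OF f] \<rho>] integrable_band_fst[OF L2_integrable_square[OF f] \<rho>]
    by simp
  show "(\<lambda>p. band \<rho> (fst p) (snd p) * (f (snd p) - f (fst p))\<^sup>2) \<in> borel_measurable (lborel \<Otimes>\<^sub>M lborel)"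
    using L2_borel_measurable[OF f] by measurable
  show "AE p in lborel \<Otimes>\<^sub>M lborel. norm (band \<rho> (fst p) (snd p) * (f (snd p) - f (fst p))\<^sup>2) \<le>
      norm (2 * ((f (snd p))\<^sup>2 * band \<rho> (fst p) (snd p)) + 2 * ((f (fst p))\<^sup>2 * band \<rho> (fst p) (snd p)))"
    using square_diff_le by (intro always_eventually allI) (simp add: band_def)
qed

lemma integrable_band_translate_square_diff:
  assumes f: "f \<in> L2" and \<rho>: "\<rho> \<ge> 0"
  shows "integrable (lborel \<Otimes>\<^sub>M lborel) (\<lambda>(x, h). band \<rho> 0 h * (f (x + h) - f x)\<^sup>2)"
proof (rule Bochner_Integration.integrable_bound)
  show "integrable (lborel \<Otimes>\<^sub>M lborel)
      (\<lambda>(x, h). 2 * ((f (x + 1 * h))\<^sup>2 * band \<rho> 0 h) + 2 * ((f (x + 0 * h))\<^sup>2 * band \<rho> 0 h))"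
    using integrable_translate_mult_pair[OF L2_integrable_square[OF f] integrable_band[OF \<rho>], of 1]
      integrable_translate_mult_pair[OF L2_integrable_square[OF f] integrable_band[OF \<rho>], of 0]
    by (simp add: case_prod_unfold)
  show "(\<lambda>(x, h). band \<rho> 0 h * (f (x + h) - f x)\<^sup>2) \<in> borel_measurable (lborel \<Otimes>\<^sub>M lborel)"
    using L2_borel_measurable[OF f] unfolding band_def by measurable
  show "AE p in lborel \<Otimes>\<^sub>M lborel. norm (case p of (x, h) \<Rightarrow> band \<rho> 0 h * (f (x + h) - f x)\<^sup>2) \<le>
      norm (case p of (x, h) \<Rightarrow> 2 * ((f (x + 1 * h))\<^sup>2 * band \<rho> 0 h) + 2 * ((f (x + 0 * h))\<^sup>2 * band \<rho> 0 h))"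
    using square_diff_le by (intro always_eventually allI) (simp add: band_def split: prod.split)
qed

text \<open>The substitution \<open>y = x + h\<close> turns the band integral into an average of the
  \<open>L\<^sup>2\<close> modulus of continuity of \<open>f\<close> over translations \<open>\<bar>h\<bar> \<le> \<rho>\<close>.\<close>
lemma integral_band_square_diff_le:
  assumes f: "f \<in> L2" and \<rho>: "\<rho> \<ge> 0"
    and modulus: "\<And>h. \<bar>h\<bar> \<le> \<rho> \<Longrightarrow> L2_modulus f h \<le> \<eta>"
  shows "(\<integral>p. band \<rho> (fst p) (snd p) * (f (snd p) - f (fst p))\<^sup>2 \<partial>(lborel \<Otimes>\<^sub>M lborel)) \<le> 2 * \<rho> * \<eta>"
proof -
  define H where "H x h = band \<rho> 0 h * (f (x + h) - f x)\<^sup>2" for x h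
  have H: "integrable (lborel \<Otimes>\<^sub>M lborel) (\<lambda>(x, h). H x h)"
    unfolding H_def using integrable_band_translate_square_diff[OF f \<rho>] .
  have "(\<integral>p. band \<rho> (fst p) (snd p) * (f (snd p) - f (fst p))\<^sup>2 \<partial>(lborel \<Otimes>\<^sub>M lborel))
      = (LINT x|lborel. LINT y|lborel. band \<rho> x y * (f y - f x)\<^sup>2)"
    using lborel_pair.integral_fst'[OF integrable_band_square_diff[OF f \<rho>]] by simp
  also have "\<dots> = (LINT x|lborel. LINT h|lborel. H x h)"
  proof -
    have "(LINT y|lborel. band \<rho> x y * (f y - f x)\<^sup>2) = (LINT h|lborel. H x h)" for x
      using integral_translate[of "\<lambda>y. band \<rho> x y * (f y - f x)\<^sup>2" x]
      by (simp add: H_def band_def add.commute)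
    then show ?thesis by simp
  qed
  also have "\<dots> = (LINT h|lborel. LINT x|lborel. H x h)"
    using lborel_pair.Fubini_integral[OF H] by simp
  also have "\<dots> \<le> (LINT h|lborel. band \<rho> 0 h * \<eta>)"
  proof (rule integral_mono)
    show "integrable lborel (\<lambda>h. LINT x|lborel. H x h)"
      using lborel_pair.integrable_snd[OF H] .
    show "integrable lborel (\<lambda>h. band \<rho> 0 h * \<eta>)"
      using integrable_band[OF \<rho>] by simp
    show "(LINT x|lborel. H x h) \<le> band \<rho> 0 h * \<eta>" for h
      using modulus[of h] by (simp add: H_def band_def L2_modulus_def)
  qed
  also have "\<dots> = 2 * \<rho> * \<eta>"
    using integral_band[OF \<rho>, of 0] by simp
  finally show ?thesis .
qed

section \<open>Continuity of translation in \<open>L\<^sup>2\<close>\<close>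

lemma L2_truncation:
  assumes f: "f \<in> L2" and \<delta>: "\<delta> > 0"
  obtains S M where "S \<in> sets borel" "M \<ge> 0" "S \<subseteq> {-M..M}" "\<And>x. x \<in> S \<Longrightarrow> \<bar>f x\<bar> \<le> M"
    "L2_norm_sq (\<lambda>x. f x - f x * indicator S x) < \<delta>"
proof -
  have [measurable]: "f \<in> borel_measurable borel" using f by (simp add: L2_iff)
  define S where "S N = {- real N .. real N} \<inter> {x. \<bar>f x\<bar> \<le> real N}" for N :: nat
  have [measurable]: "S N \<in> sets borel" for N
    unfolding S_def by measurable
  have "(\<lambda>N. f x * indicator (S N) x) \<longlonglongrightarrow> f x" for x
  proof (rule tendsto_eventually)
    obtain N0 :: nat where "max \<bar>x\<bar> \<bar>f x\<bar> \<le> real N0" using real_arch_simple by blast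
    moreover have "real N0 \<le> real N" if "N \<ge> N0" for N
      using that by simp
    ultimately have "x \<in> S N" if "N \<ge> N0" for N
      using that unfolding S_def by fastforce
    then show "\<forall>\<^sub>F N in sequentially. f x * indicator (S N) x = f x"
      unfolding eventually_sequentially by (auto intro!: exI[of _ N0])
  qed
  then have "(\<lambda>N. L2_norm_sq (\<lambda>x. f x - f x * indicator (S N) x)) \<longlonglongrightarrow> 0"
    by (intro L2_dominated_convergence[OF f, where C = 1]) (auto simp: indicator_def)
  then have "\<forall>\<^sub>F N in sequentially. L2_norm_sq (\<lambda>x. f x - f x * indicator (S N) x) < \<delta>"
    using \<delta> by (intro order_tendstoD(2))
  then obtain N where "L2_norm_sq (\<lambda>x. f x - f x * indicator (S N) x) < \<delta>"
    by (auto simp: eventually_sequentially)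
  then show ?thesis
    by (intro that[of "S N" "real N"]) (auto simp: S_def)
qed

lemma L2_bounded_support_approx:
  assumes f: "f \<in> L2" and \<delta>: "\<delta> > 0"
  obtains g M where "g \<in> L2" "\<And>x. \<bar>g x\<bar> \<le> M" "\<And>x. M < \<bar>x\<bar> \<Longrightarrow> g x = 0"
    "L2_norm_sq (\<lambda>x. f x - g x) < \<delta>"
proof -
  obtain S M where S: "S \<in> sets borel" "M \<ge> 0" "S \<subseteq> {-M..M}" "\<And>x. x \<in> S \<Longrightarrow> \<bar>f x\<bar> \<le> M"
    "L2_norm_sq (\<lambda>x. f x - f x * indicator S x) < \<delta>"
    using L2_truncation[OF f \<delta>] by metis
  show ?thesis
  proof (rule that[of "\<lambda>x. f x * indicator S x" M])
    show "(\<lambda>x. f x * indicator S x) \<in> L2"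
      using S(1) by (intro L2_mult_bounded[OF f]) (auto simp: indicator_def)
    show "\<bar>f x * indicator S x\<bar> \<le> M" for x
      using S(2,4) by (auto simp: indicator_def)
    show "f x * indicator S x = 0" if "M < \<bar>x\<bar>" for x
    proof -
      have "x \<notin> {-M..M}" using that by auto
      then show ?thesis using S(3) by (auto simp: indicator_def)
    qed
  qed (use S(5) in simp)
qed

definition translation_continuous :: "(real \<Rightarrow> real) \<Rightarrow> bool" where
  "translation_continuous f \<longleftrightarrow> (\<forall>\<eta>>0. \<exists>\<delta>>0. \<forall>h. \<bar>h\<bar> < \<delta> \<longrightarrow> L2_modulus f h \<le> \<eta>)"

lemma L2_modulus_add_le:
  assumes f: "f \<in> L2" and g: "g \<in> L2"
  shows "L2_modulus (\<lambda>x. f x + g x) h \<le> 2 * (L2_modulus f h + L2_modulus g h)"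
proof -
  have fh: "integrable lborel (\<lambda>x. (f (x + h) - f x)\<^sup>2)"
    using L2_integrable_square[OF L2_diff[OF L2_translate[OF f] f]] .
  have gh: "integrable lborel (\<lambda>x. (g (x + h) - g x)\<^sup>2)"
    using L2_integrable_square[OF L2_diff[OF L2_translate[OF g] g]] .
  have "(LINT x|lborel. (f (x + h) + g (x + h) - (f x + g x))\<^sup>2)
      \<le> (LINT x|lborel. 2 * ((f (x + h) - f x)\<^sup>2 + (g (x + h) - g x)\<^sup>2))"
  proof (rule integral_mono)
    show "integrable lborel (\<lambda>x. (f (x + h) + g (x + h) - (f x + g x))\<^sup>2)"
      using L2_integrable_square[OF L2_diff[OF L2_translate[OF L2_add[OF f g]] L2_add[OF f g]]] .
    show "integrable lborel (\<lambda>x. 2 * ((f (x + h) - f x)\<^sup>2 + (g (x + h) - g x)\<^sup>2))"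
      using fh gh by simp
    fix x
    have "f (x + h) + g (x + h) - (f x + g x) = (f (x + h) - f x) + (g (x + h) - g x)"
      by simp
    then show "(f (x + h) + g (x + h) - (f x + g x))\<^sup>2 \<le> 2 * ((f (x + h) - f x)\<^sup>2 + (g (x + h) - g x)\<^sup>2)"
      by (simp only: square_sum_le)
  qed
  then show ?thesis
    using fh gh by (simp add: L2_modulus_def)
qed

lemma L2_modulus_approx_le:
  assumes f: "f \<in> L2" and g: "g \<in> L2"
  shows "L2_modulus f h \<le> 3 * (L2_modulus g h + 2 * L2_norm_sq (\<lambda>x. f x - g x))"
proof -
  define d where "d = (\<lambda>x. f x - g x)"
  have d: "d \<in> L2" unfolding d_def using L2_diff[OF f g] .
  have dh: "integrable lborel (\<lambda>x. (d (x + h))\<^sup>2)"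
    using L2_integrable_square[OF L2_translate[OF d]] .
  have gh: "integrable lborel (\<lambda>x. (g (x + h) - g x)\<^sup>2)"
    using L2_integrable_square[OF L2_diff[OF L2_translate[OF g] g]] .
  have d0: "integrable lborel (\<lambda>x. (d x)\<^sup>2)"
    using L2_integrable_square[OF d] .
  have "L2_modulus f h \<le> (LINT x|lborel. 3 * ((d (x + h))\<^sup>2 + (g (x + h) - g x)\<^sup>2 + (d x)\<^sup>2))"
    unfolding L2_modulus_def
  proof (rule integral_mono)
    show "integrable lborel (\<lambda>x. (f (x + h) - f x)\<^sup>2)"
      using L2_integrable_square[OF L2_diff[OF L2_translate[OF f] f]] .
    show "integrable lborel (\<lambda>x. 3 * ((d (x + h))\<^sup>2 + (g (x + h) - g x)\<^sup>2 + (d x)\<^sup>2))"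
      using dh gh d0 by simp
    fix x
    have "f (x + h) - f x = d (x + h) + (g (x + h) - g x) - d x"
      unfolding d_def by simp
    then show "(f (x + h) - f x)\<^sup>2 \<le> 3 * ((d (x + h))\<^sup>2 + (g (x + h) - g x)\<^sup>2 + (d x)\<^sup>2)"
      by (simp only: square_sum_diff_le)
  qed
  also have "\<dots> = 3 * (L2_norm_sq (\<lambda>x. d (x + h)) + L2_modulus g h + L2_norm_sq d)"
    using dh gh d0 by (simp add: L2_modulus_def L2_norm_sq_def)
  finally have "L2_modulus f h \<le> 3 * (L2_norm_sq (\<lambda>x. d (x + h)) + L2_modulus g h + L2_norm_sq d)" .
  then show ?thesis
    unfolding L2_norm_sq_translate by (simp add: d_def)
qed

lemma translation_continuous_approx:
  assumes f: "f \<in> L2"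
    and approx: "\<And>\<epsilon>. \<epsilon> > 0 \<Longrightarrow> \<exists>g\<in>L2. translation_continuous g \<and> L2_norm_sq (\<lambda>x. f x - g x) < \<epsilon>"
  shows "translation_continuous f"
  unfolding translation_continuous_def
proof (intro allI impI)
  fix \<eta> :: real assume "\<eta> > 0"
  then obtain g where g: "g \<in> L2" "translation_continuous g" "L2_norm_sq (\<lambda>x. f x - g x) < \<eta> / 9"
    using approx[of "\<eta> / 9"] by auto
  obtain \<delta> where \<delta>: "\<delta> > 0" "\<And>h. \<bar>h\<bar> < \<delta> \<Longrightarrow> L2_modulus g h \<le> \<eta> / 9"
    using g(2) \<open>\<eta> > 0\<close> unfolding translation_continuous_def by (metis divide_pos_pos zero_less_numeral)
  have "L2_modulus f h \<le> \<eta>" if "\<bar>h\<bar> < \<delta>" for h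
  proof -
    have "L2_modulus f h \<le> 3 * (L2_modulus g h + 2 * L2_norm_sq (\<lambda>x. f x - g x))"
      using L2_modulus_approx_le[OF f g(1)] .
    also have "\<dots> \<le> 3 * (\<eta> / 9 + 2 * (\<eta> / 9))"
      using \<delta>(2)[OF that] g(3) by simp
    finally show ?thesis by simp
  qed
  then show "\<exists>\<delta>>0. \<forall>h. \<bar>h\<bar> < \<delta> \<longrightarrow> L2_modulus f h \<le> \<eta>"
    using \<delta>(1) by blast
qed

lemma translation_continuous_zero: "translation_continuous (\<lambda>x. 0)"
  unfolding translation_continuous_def L2_modulus_def by auto

lemma translation_continuous_cmult:
  assumes "translation_continuous f"
  shows "translation_continuous (\<lambda>x. c * f x)"
  unfolding translation_continuous_def L2_modulus_cmult
proof (intro allI impI)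
  fix \<eta> :: real assume "\<eta> > 0"
  have c: "0 < c\<^sup>2 + 1" by (simp add: add_nonneg_pos)
  obtain \<delta> where \<delta>: "\<delta> > 0" "\<And>h. \<bar>h\<bar> < \<delta> \<Longrightarrow> L2_modulus f h \<le> \<eta> / (c\<^sup>2 + 1)"
    using assms \<open>\<eta> > 0\<close> c unfolding translation_continuous_def by (metis divide_pos_pos)
  have "c\<^sup>2 * L2_modulus f h \<le> \<eta>" if "\<bar>h\<bar> < \<delta>" for h
  proof -
    have "c\<^sup>2 * L2_modulus f h \<le> c\<^sup>2 * (\<eta> / (c\<^sup>2 + 1))"
      using \<delta>(2)[OF that] by (intro mult_left_mono) auto
    also have "\<dots> \<le> (c\<^sup>2 + 1) * (\<eta> / (c\<^sup>2 + 1))"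
      using \<open>\<eta> > 0\<close> by (intro mult_right_mono) auto
    also have "\<dots> = \<eta>"
      using c by simp
    finally show ?thesis .
  qed
  then show "\<exists>\<delta>>0. \<forall>h. \<bar>h\<bar> < \<delta> \<longrightarrow> c\<^sup>2 * L2_modulus f h \<le> \<eta>"
    using \<delta>(1) by blast
qed

lemma translation_continuous_add:
  assumes f: "f \<in> L2" "translation_continuous f" and g: "g \<in> L2" "translation_continuous g"
  shows "translation_continuous (\<lambda>x. f x + g x)"
  unfolding translation_continuous_def
proof (intro allI impI)
  fix \<eta> :: real assume "\<eta> > 0"
  obtain \<delta>1 where \<delta>1: "\<delta>1 > 0" "\<And>h. \<bar>h\<bar> < \<delta>1 \<Longrightarrow> L2_modulus f h \<le> \<eta> / 4"
    using f(2) \<open>\<eta> > 0\<close> unfolding translation_continuous_def by (metis divide_pos_pos zero_less_numeral)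
  obtain \<delta>2 where \<delta>2: "\<delta>2 > 0" "\<And>h. \<bar>h\<bar> < \<delta>2 \<Longrightarrow> L2_modulus g h \<le> \<eta> / 4"
    using g(2) \<open>\<eta> > 0\<close> unfolding translation_continuous_def by (metis divide_pos_pos zero_less_numeral)
  have "L2_modulus (\<lambda>x. f x + g x) h \<le> \<eta>" if "\<bar>h\<bar> < min \<delta>1 \<delta>2" for h
    using L2_modulus_add_le[OF f(1) g(1), of h] \<delta>1(2)[of h] \<delta>2(2)[of h] that by simp
  then show "\<exists>\<delta>>0. \<forall>h. \<bar>h\<bar> < \<delta> \<longrightarrow> L2_modulus (\<lambda>x. f x + g x) h \<le> \<eta>"
    using \<delta>1(1) \<delta>2(1) by (intro exI[of _ "min \<delta>1 \<delta>2"]) auto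
qed

lemma translation_continuous_sum:
  assumes "finite I" "\<And>i. i \<in> I \<Longrightarrow> F i \<in> L2 \<and> translation_continuous (F i)"
  shows "(\<lambda>x. \<Sum>i\<in>I. F i x) \<in> L2 \<and> translation_continuous (\<lambda>x. \<Sum>i\<in>I. F i x)"
  using assms
proof (induction I rule: finite_induct)
  case empty
  then show ?case using L2_zero translation_continuous_zero by simp
next
  case (insert i I)
  then show ?case
    using L2_add[of "F i"] translation_continuous_add[of "F i"] by simp
qed

lemma compact_translate_subset_open:
  fixes K U :: "real set"
  assumes "compact K" "K \<subseteq> U" "open U"
  obtains \<epsilon> where "\<epsilon> > 0" "\<And>y h. y \<in> K \<Longrightarrow> \<bar>h\<bar> < \<epsilon> \<Longrightarrow> y + h \<in> U"
proof -
  obtain \<epsilon> where "\<epsilon> > 0" "\<And>y. y \<in> K \<Longrightarrow> ball y \<epsilon> \<subseteq> U"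
    using Heine_Borel_lemma[OF assms(1), of "{U}"] assms(2,3) by auto
  moreover have "y + h \<in> ball y \<epsilon>" if "\<bar>h\<bar> < \<epsilon>" for y h
    using that by (simp add: dist_real_def)
  ultimately show ?thesis using that by blast
qed

lemma lborel_compact_open_approx:
  fixes A :: "real set"
  assumes A: "A \<in> sets borel" "bounded A" and e: "e > 0"
  obtains K U where "compact K" "open U" "K \<subseteq> A" "A \<subseteq> U" "emeasure lborel (U - K) < ennreal e"
proof -
  obtain U where U: "open U" "A \<subseteq> U" "emeasure lborel (U - A) < ennreal (e / 2)"
    using outer_regular_lborel[OF A(1), of "e / 2"] e by auto
  obtain V where V: "open V" "- A \<subseteq> V" "emeasure lborel (V - - A) < ennreal (e / 2)"
    using outer_regular_lborel[of "- A" "e / 2"] A(1) e by auto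
  have "- V \<subseteq> A" using V(2) by blast
  then have "compact (- V)"
    using V(1) A(2) bounded_subset by (auto simp: compact_eq_bounded_closed)
  moreover have "emeasure lborel (U - - V) < ennreal e"
  proof -
    have "emeasure lborel (U - - V) \<le> emeasure lborel (U - A) + emeasure lborel (V - - A)"
      using U(1) V(1) A(1) by (intro order.trans[OF emeasure_mono emeasure_subadditive]) auto
    also have "\<dots> < ennreal (e / 2) + ennreal (e / 2)"
      using U(3) V(3) by (rule add_strict_mono)
    finally show ?thesis using e by (simp flip: ennreal_plus)
  qed
  ultimately show ?thesis using that U(1,2) V(2) by blast
qed

lemma integral_indicator_translate_diff_le:
  fixes A K U :: "real set"
  assumes A: "A \<in> sets borel" and KU: "K \<subseteq> A" "A \<subseteq> U" "U - K \<in> sets borel" "emeasure lborel (U - K) < \<infinity>"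
    and translate: "\<And>y. y \<in> K \<Longrightarrow> y + h \<in> U" "\<And>y. y \<in> K \<Longrightarrow> y - h \<in> U"
  shows "L2_modulus (indicator A) h \<le> 2 * measure lborel (U - K)"
proof -
  let ?D = "indicator (U - K) :: real \<Rightarrow> real"
  have D_integrable: "integrable lborel (\<lambda>x. ?D (x + c))" for c
    using lborel_integrable_real_affine[of ?D 1 c] KU(3,4) by (simp add: integrable_indicator_iff add.commute)
  have pointwise: "(indicator A (x + h) - indicator A x :: real)\<^sup>2 \<le> ?D x + ?D (x + h)" for x
    using KU(1,2) translate[of x] translate[of "x + h"] by (auto simp: indicator_def)
  have "(LINT x|lborel. (indicator A (x + h) - indicator A x :: real)\<^sup>2) \<le> (LINT x|lborel. ?D x + ?D (x + h))"
  proof (rule integral_mono[OF _ _ pointwise])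
    show "integrable lborel (\<lambda>x. ?D x + ?D (x + h))"
      using D_integrable[of 0] D_integrable[of h] by simp
    then show "integrable lborel (\<lambda>x. (indicator A (x + h) - indicator A x :: real)\<^sup>2)"
    proof (rule Bochner_Integration.integrable_bound)
      show "(\<lambda>x. (indicator A (x + h) - indicator A x :: real)\<^sup>2) \<in> borel_measurable lborel"
        using A by measurable
    qed (use pointwise in \<open>auto intro: always_eventually\<close>)
  qed
  also have "\<dots> = 2 * measure lborel (U - K)"
    using KU(3,4) D_integrable[of 0] D_integrable[of h] integral_translate[of ?D h]
    by (simp add: integrable_indicator_iff less_top)
  finally show ?thesis
    unfolding L2_modulus_def .
qed

text \<open>Inner and outer regularity squeeze a bounded \<open>A\<close> between a compact \<open>K\<close> and an open
  \<open>U\<close>; small translations keep \<open>K\<close> inside \<open>U\<close>, so \<open>A\<close> and its translate differ only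
  on a set of measure at most \<open>2 \<mu>(U - K)\<close>.\<close>
lemma translation_continuous_indicator_bounded:
  fixes A :: "real set"
  assumes A: "A \<in> sets borel" "bounded A"
  shows "translation_continuous (indicator A :: real \<Rightarrow> real)"
  unfolding translation_continuous_def
proof (intro allI impI)
  fix \<eta> :: real assume "\<eta> > 0"
  then obtain K U where KU: "compact K" "open U" "K \<subseteq> A" "A \<subseteq> U" "emeasure lborel (U - K) < ennreal (\<eta> / 2)"
    using lborel_compact_open_approx[OF A, of "\<eta> / 2"] by auto
  obtain \<epsilon> where \<epsilon>: "\<epsilon> > 0" "\<And>y h. y \<in> K \<Longrightarrow> \<bar>h\<bar> < \<epsilon> \<Longrightarrow> y + h \<in> U"
    using compact_translate_subset_open[OF KU(1) _ KU(2)] KU(3,4) by blast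
  have UK: "U - K \<in> sets borel" "emeasure lborel (U - K) < \<infinity>"
    using KU(1,2,5) compact_imp_closed by (auto intro!: sets.Diff borel_closed borel_open intro: order.strict_trans)
  have "2 * measure lborel (U - K) \<le> \<eta>"
    using KU(5) UK(2) \<open>\<eta> > 0\<close> by (simp add: emeasure_eq_ennreal_measure less_top ennreal_less_iff)
  moreover have "L2_modulus (indicator A) h \<le> 2 * measure lborel (U - K)" if "\<bar>h\<bar> < \<epsilon>" for h
    using that \<epsilon>(2)[of _ h] \<epsilon>(2)[of _ "- h"]
    by (intro integral_indicator_translate_diff_le[OF A(1) KU(3,4) UK]) auto
  ultimately show "\<exists>\<delta>>0. \<forall>h. \<bar>h\<bar> < \<delta> \<longrightarrow> L2_modulus (indicator A) h \<le> \<eta>"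
    using \<epsilon>(1) by force
qed

lemma translation_continuous_indicator:
  assumes A: "A \<in> sets borel" "emeasure lborel A < \<infinity>"
  shows "translation_continuous (indicator A :: real \<Rightarrow> real)"
proof (rule translation_continuous_approx[OF L2_indicator[OF A]])
  fix \<epsilon> :: real assume "\<epsilon> > 0"
  then obtain S M where S: "S \<in> sets borel" "S \<subseteq> {-M..M}"
    "L2_norm_sq (\<lambda>x. indicator A x - indicator A x * indicator S x :: real) < \<epsilon>"
    using L2_truncation[OF L2_indicator[OF A]] by metis
  have AS: "(\<lambda>x. indicator A x * indicator S x :: real) = indicator (A \<inter> S)"
    by (auto simp: indicator_def)
  have "indicator (A \<inter> S) \<in> L2"
    unfolding AS[symmetric] using S(1) by (intro L2_mult_bounded[OF L2_indicator[OF A]]) (auto simp: indicator_def)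
  moreover have "translation_continuous (indicator (A \<inter> S))"
    using A(1) S(1,2) bounded_subset[OF bounded_closed_interval, of "A \<inter> S" "- M" M]
    by (intro translation_continuous_indicator_bounded) auto
  moreover have "L2_norm_sq (\<lambda>x. indicator A x - indicator (A \<inter> S) x) < \<epsilon>"
    using S(3) by (simp add: indicator_inter_arith)
  ultimately show "\<exists>g\<in>L2. translation_continuous g \<and> L2_norm_sq (\<lambda>x. indicator A x - g x) < \<epsilon>"
    by blast
qed

lemma L2_simple_level_set_finite:
  assumes F: "simple_function lborel F" "F \<in> L2" and y: "y \<noteq> 0"
  shows "F -` {y} \<in> sets borel" "emeasure lborel (F -` {y}) < \<infinity>"
proof -
  show level: "F -` {y} \<in> sets borel"
    using simple_functionD(2)[OF F(1), of "{y}"] by simp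
  have "integrable lborel (indicator (F -` {y}) :: real \<Rightarrow> real)"
  proof (rule Bochner_Integration.integrable_bound)
    show "integrable lborel (\<lambda>x. (F x)\<^sup>2 / y\<^sup>2)"
      using L2_integrable_square[OF F(2)] by simp
    show "AE x in lborel. norm (indicator (F -` {y}) x :: real) \<le> norm ((F x)\<^sup>2 / y\<^sup>2)"
      using y by (intro always_eventually allI) (auto simp: indicator_def)
  qed (use level in simp)
  then show "emeasure lborel (F -` {y}) < \<infinity>"
    by (simp add: integrable_indicator_iff)
qed

lemma translation_continuous_simple:
  assumes F: "simple_function lborel F" "F \<in> L2"
  shows "translation_continuous F"
proof -
  have F_eq: "F = (\<lambda>x. \<Sum>y\<in>F ` UNIV. y * indicator (F -` {y}) x)"
  proof
    fix x
    show "F x = (\<Sum>y\<in>F ` UNIV. y * indicator (F -` {y}) x)"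
      using simple_function_indicator_representation_banach[OF F(1), of x]
      by (simp only: space_lborel space_borel Int_UNIV_right UNIV_I real_scaleR_def mult.commute)
  qed
  have "(\<lambda>x. y * indicator (F -` {y}) x) \<in> L2 \<and> translation_continuous (\<lambda>x. y * indicator (F -` {y}) x)" for y
  proof (cases "y = 0")
    case True
    then show ?thesis using L2_zero translation_continuous_zero by simp
  next
    case False
    note level = L2_simple_level_set_finite[OF F False]
    show ?thesis
      using L2_cmult[OF L2_indicator[OF level]]
        translation_continuous_cmult[OF translation_continuous_indicator[OF level]] by blast
  qed
  moreover have "finite (F ` UNIV)"
    using simple_functionD(1)[OF F(1)] by simp
  ultimately have "translation_continuous (\<lambda>x. \<Sum>y\<in>F ` UNIV. y * indicator (F -` {y}) x)"
    using translation_continuous_sum[of "F ` UNIV" "\<lambda>y x. y * indicator (F -` {y}) x"] by blast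
  then show ?thesis
    by (subst F_eq)
qed

lemma L2_simple_approx:
  assumes f: "f \<in> L2" and \<epsilon>: "\<epsilon> > 0"
  obtains F where "simple_function lborel F" "F \<in> L2" "L2_norm_sq (\<lambda>x. f x - F x) < \<epsilon>"
proof -
  have "f \<in> borel_measurable lborel" using f by (simp add: L2_iff)
  from borel_measurable_implies_sequence_metric[OF this, of 0]
  obtain F where F: "\<And>i. simple_function lborel (F i)" "\<And>x. (\<lambda>i. F i x) \<longlonglongrightarrow> f x"
    "\<And>i x. \<bar>F i x\<bar> \<le> 2 * \<bar>f x\<bar>"
    by (auto simp: dist_real_def)
  have F_measurable: "F i \<in> borel_measurable borel" for i
    using borel_measurable_simple_function[OF F(1)] by (simp add: measurable_lborel2)
  have "(\<lambda>i. L2_norm_sq (\<lambda>x. f x - F i x)) \<longlonglongrightarrow> 0"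
    using L2_dominated_convergence[OF f F_measurable F(2,3)] .
  then have "\<forall>\<^sub>F i in sequentially. L2_norm_sq (\<lambda>x. f x - F i x) < \<epsilon>"
    using \<epsilon> by (intro order_tendstoD(2))
  then obtain i where "L2_norm_sq (\<lambda>x. f x - F i x) < \<epsilon>"
    by (auto simp: eventually_sequentially)
  then show ?thesis
    using that[OF F(1) L2_dominated[OF f F_measurable F(3)]] by blast
qed

theorem L2_translation_continuous:
  assumes "f \<in> L2"
  shows "translation_continuous f"
proof (rule translation_continuous_approx[OF assms])
  fix \<epsilon> :: real assume "\<epsilon> > 0"
  then obtain F where "simple_function lborel F" "F \<in> L2" "L2_norm_sq (\<lambda>x. f x - F x) < \<epsilon>"
    using L2_simple_approx[OF assms] by blast
  then show "\<exists>g\<in>L2. translation_continuous g \<and> L2_norm_sq (\<lambda>x. f x - g x) < \<epsilon>"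
    using translation_continuous_simple by blast
qed

lemma tendsto_of_eventually_le_mult:
  fixes g :: "'a \<Rightarrow> real"
  assumes "\<And>\<epsilon>. \<epsilon> > 0 \<Longrightarrow> \<forall>\<^sub>F x in F. \<bar>g x - l\<bar> \<le> C * \<epsilon>"
  shows "(g \<longlongrightarrow> l) F"
proof (rule tendstoI)
  fix e :: real assume "e > 0"
  then have ev: "\<forall>\<^sub>F x in F. \<bar>g x - l\<bar> \<le> C * (e / (\<bar>C\<bar> + 1))"
    by (intro assms) (simp add: add_nonneg_pos)
  have bound: "C * (e / (\<bar>C\<bar> + 1)) < e"
  proof -
    have "C * (e / (\<bar>C\<bar> + 1)) \<le> \<bar>C\<bar> * (e / (\<bar>C\<bar> + 1))"
      using \<open>e > 0\<close> by (intro mult_right_mono) (auto simp: add_nonneg_pos)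
    also have "\<dots> < e"
      using \<open>e > 0\<close> by (simp add: field_simps add_nonneg_pos)
    finally show ?thesis .
  qed
  show "\<forall>\<^sub>F x in F. dist (g x) l < e"
    using ev by (rule eventually_mono) (use bound in \<open>simp add: dist_real_def\<close>)
qed

section \<open>Dilations of a local averaging kernel\<close>

lemma filterlim_dyadic_at_top: "filterlim (\<lambda>j::int. 2 powr real_of_int j) at_top at_top"
proof -
  have "filterlim (\<lambda>x::real. 2 powr x) at_top at_top" by real_asymp
  from filterlim_compose[OF this filterlim_real_of_int_at_top] show ?thesis by (simp add: o_def)
qed

lemma filterlim_dyadic_at_bot: "filterlim (\<lambda>j::int. 2 powr real_of_int j) (at_right 0) at_bot"
proof -
  have "filterlim (\<lambda>x::real. 2 powr x) (at_right 0) at_bot" by real_asymp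
  from filterlim_compose[OF this filterlim_real_of_int_at_bot] show ?thesis by (simp add: o_def)
qed

locale averaging_kernel =
  fixes K :: "real \<Rightarrow> real \<Rightarrow> real" and B r :: real
  assumes kernel_measurable: "(\<lambda>p. K (fst p) (snd p)) \<in> borel_measurable (lborel \<Otimes>\<^sub>M lborel)"
    and kernel_bounded: "\<And>x y. \<bar>K x y\<bar> \<le> B"
    and radius_pos: "r > 0"
    and kernel_local: "\<And>x y. r < \<bar>x - y\<bar> \<Longrightarrow> K x y = 0"
    and kernel_row_integral: "\<And>x. (LINT y|lborel. K x y) = 1"
begin

definition dilated_form :: "real \<Rightarrow> (real \<Rightarrow> real) \<Rightarrow> (real \<Rightarrow> real) \<Rightarrow> real" where
  "dilated_form a u v = a * (\<integral>p. u (fst p) * K (a * fst p) (a * snd p) * v (snd p) \<partial>(lborel \<Otimes>\<^sub>M lborel))"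

lemma bound_nonneg: "B \<ge> 0"
  using kernel_bounded[of 0 0] by simp

lemma dilated_kernel_measurable [measurable]:
  "(\<lambda>p. K (a * fst p) (a * snd p)) \<in> borel_measurable (lborel \<Otimes>\<^sub>M lborel)"
proof -
  have "(\<lambda>p. (a * fst p, a * snd p)) \<in> (lborel \<Otimes>\<^sub>M lborel) \<rightarrow>\<^sub>M (lborel \<Otimes>\<^sub>M lborel)"
    by measurable
  from measurable_compose[OF this kernel_measurable] show ?thesis
    by (simp add: o_def)
qed

lemma dilated_kernel_le_band:
  assumes "a > 0"
  shows "\<bar>K (a * x) (a * y)\<bar> \<le> B * band (r / a) x y"
proof (cases "\<bar>x - y\<bar> \<le> r / a")
  case True
  then show ?thesis using kernel_bounded by (simp add: band_def)
next
  case False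
  then have "r < a * \<bar>x - y\<bar>"
    using assms by (simp add: field_simps)
  then have "r < \<bar>a * x - a * y\<bar>"
    using assms by (simp add: abs_mult right_diff_distrib[symmetric])
  then show ?thesis using kernel_local False by (simp add: band_def)
qed

lemma abs_dilated_integrand_le:
  assumes a: "a > 0" and t: "t > 0"
  shows "\<bar>u * K (a * x) (a * y) * w\<bar>
    \<le> B * t\<^sup>2 / 2 * (u\<^sup>2 * band (r / a) x y) + B / (2 * t\<^sup>2) * (band (r / a) x y * w\<^sup>2)"
proof -
  have "\<bar>u * K (a * x) (a * y) * w\<bar> = \<bar>K (a * x) (a * y)\<bar> * \<bar>u * w\<bar>"
    by (simp add: abs_mult)
  also have "\<dots> \<le> (B * band (r / a) x y) * ((t\<^sup>2 * u\<^sup>2 + w\<^sup>2 / t\<^sup>2) / 2)"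
    using dilated_kernel_le_band[OF a] abs_mult_le_weighted_squares[OF t] bound_nonneg band_nonneg
    by (intro mult_mono) auto
  also have "\<dots> = B * t\<^sup>2 / 2 * (u\<^sup>2 * band (r / a) x y) + B / (2 * t\<^sup>2) * (band (r / a) x y * w\<^sup>2)"
    by (simp add: field_simps)
  finally show ?thesis .
qed

text \<open>Schur-type estimate: by AM-GM, \<open>\<bar>u(x) w(x,y)\<bar>\<close> splits into a part controlled by
  \<open>\<parallel>u\<parallel>\<^sup>2\<close> and a band integral of \<open>w\<^sup>2\<close>.\<close>
lemma dilated_integral_bound:
  assumes u: "u \<in> L2" and a: "a > 0" and t: "t > 0"
    and w: "w \<in> borel_measurable (lborel \<Otimes>\<^sub>M lborel)"
    and w_band: "integrable (lborel \<Otimes>\<^sub>M lborel) (\<lambda>p. band (r / a) (fst p) (snd p) * (w p)\<^sup>2)"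
  shows "integrable (lborel \<Otimes>\<^sub>M lborel) (\<lambda>p. u (fst p) * K (a * fst p) (a * snd p) * w p)"
    and "a * \<bar>\<integral>p. u (fst p) * K (a * fst p) (a * snd p) * w p \<partial>(lborel \<Otimes>\<^sub>M lborel)\<bar>
      \<le> B * r * t\<^sup>2 * L2_norm_sq u
         + B * a / (2 * t\<^sup>2) * (\<integral>p. band (r / a) (fst p) (snd p) * (w p)\<^sup>2 \<partial>(lborel \<Otimes>\<^sub>M lborel))"
proof -
  have [measurable]: "u \<in> borel_measurable borel" using u by (simp add: L2_iff)
  define \<rho> where "\<rho> = r / a"
  have \<rho>: "\<rho> \<ge> 0" using radius_pos a by (simp add: \<rho>_def)
  define W where "W = (\<integral>p. band \<rho> (fst p) (snd p) * (w p)\<^sup>2 \<partial>(lborel \<Otimes>\<^sub>M lborel))"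
  define G where "G p = B * t\<^sup>2 / 2 * ((u (fst p))\<^sup>2 * band \<rho> (fst p) (snd p))
    + B / (2 * t\<^sup>2) * (band \<rho> (fst p) (snd p) * (w p)\<^sup>2)" for p
  note u_band = integrable_band_fst[OF L2_integrable_square[OF u] \<rho>]
  have G: "integrable (lborel \<Otimes>\<^sub>M lborel) G"
    unfolding G_def using u_band w_band by (simp add: \<rho>_def)
  have G_integral: "integral\<^sup>L (lborel \<Otimes>\<^sub>M lborel) G = B * t\<^sup>2 * \<rho> * L2_norm_sq u + B / (2 * t\<^sup>2) * W"
    unfolding G_def W_def using u_band w_band integral_band_fst[OF L2_integrable_square[OF u] \<rho>]
    by (simp add: \<rho>_def L2_norm_sq_def)
  have bound: "\<bar>u (fst p) * K (a * fst p) (a * snd p) * w p\<bar> \<le> G p" for p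
    unfolding G_def \<rho>_def by (rule abs_dilated_integrand_le[OF a t])
  show I: "integrable (lborel \<Otimes>\<^sub>M lborel) (\<lambda>p. u (fst p) * K (a * fst p) (a * snd p) * w p)"
  proof (rule Bochner_Integration.integrable_bound[OF G])
    show "(\<lambda>p. u (fst p) * K (a * fst p) (a * snd p) * w p) \<in> borel_measurable (lborel \<Otimes>\<^sub>M lborel)"
      using w by measurable
    show "AE p in lborel \<Otimes>\<^sub>M lborel. norm (u (fst p) * K (a * fst p) (a * snd p) * w p) \<le> norm (G p)"
      using bound by (intro always_eventually allI) (auto intro: order.trans[OF _ abs_ge_self])
  qed
  have "\<bar>\<integral>p. u (fst p) * K (a * fst p) (a * snd p) * w p \<partial>(lborel \<Otimes>\<^sub>M lborel)\<bar> \<le> integral\<^sup>L (lborel \<Otimes>\<^sub>M lborel) G"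
    using I G bound by (intro integral_abs_bound_integral) auto
  then have "a * \<bar>\<integral>p. u (fst p) * K (a * fst p) (a * snd p) * w p \<partial>(lborel \<Otimes>\<^sub>M lborel)\<bar>
      \<le> a * (B * t\<^sup>2 * \<rho> * L2_norm_sq u + B / (2 * t\<^sup>2) * W)"
    using a unfolding G_integral by (intro mult_left_mono) auto
  also have "\<dots> = B * r * t\<^sup>2 * L2_norm_sq u + B * a / (2 * t\<^sup>2) * W"
    using a by (simp add: \<rho>_def field_simps)
  finally show "a * \<bar>\<integral>p. u (fst p) * K (a * fst p) (a * snd p) * w p \<partial>(lborel \<Otimes>\<^sub>M lborel)\<bar>
      \<le> B * r * t\<^sup>2 * L2_norm_sq u
         + B * a / (2 * t\<^sup>2) * (\<integral>p. band (r / a) (fst p) (snd p) * (w p)\<^sup>2 \<partial>(lborel \<Otimes>\<^sub>M lborel))"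
    unfolding W_def \<rho>_def .
qed

lemma
  assumes u: "u \<in> L2" and v: "v \<in> L2" and a: "a > 0"
  shows dilated_form_integrable:
      "integrable (lborel \<Otimes>\<^sub>M lborel) (\<lambda>p. u (fst p) * K (a * fst p) (a * snd p) * v (snd p))"
    and dilated_form_bound:
      "t > 0 \<Longrightarrow> \<bar>dilated_form a u v\<bar> \<le> B * r * (t\<^sup>2 * L2_norm_sq u + L2_norm_sq v / t\<^sup>2)"
proof -
  have [measurable]: "v \<in> borel_measurable borel" using v by (simp add: L2_iff)
  have \<rho>: "r / a \<ge> 0" using radius_pos a by simp
  have v_band: "(\<lambda>p. band (r / a) (fst p) (snd p) * (v (snd p))\<^sup>2) = (\<lambda>p. (v (snd p))\<^sup>2 * band (r / a) (fst p) (snd p))"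
    by (simp add: mult.commute)
  note bound = dilated_integral_bound[OF u a _ _ integrable_band_snd[OF L2_integrable_square[OF v] \<rho>, folded v_band]]
  show "integrable (lborel \<Otimes>\<^sub>M lborel) (\<lambda>p. u (fst p) * K (a * fst p) (a * snd p) * v (snd p))"
    using bound(1)[OF zero_less_one] by simp
  assume t: "t > 0"
  have "\<bar>dilated_form a u v\<bar> \<le> B * r * t\<^sup>2 * L2_norm_sq u + B * a / (2 * t\<^sup>2) * (2 * (r / a) * L2_norm_sq v)"
    using bound(2)[OF t] a integral_band_snd[OF L2_integrable_square[OF v] \<rho>]
    unfolding dilated_form_def v_band by (simp add: abs_mult L2_norm_sq_def)
  also have "\<dots> = B * r * (t\<^sup>2 * L2_norm_sq u + L2_norm_sq v / t\<^sup>2)"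
    using a t by (simp add: field_simps)
  finally show "\<bar>dilated_form a u v\<bar> \<le> B * r * (t\<^sup>2 * L2_norm_sq u + L2_norm_sq v / t\<^sup>2)" .
qed

end

context averaging_kernel
begin

lemma dilated_form_at_one_bound: "f \<in> L2 \<Longrightarrow> dilated_form 1 f f \<le> 2 * B * r * L2_norm_sq f"
  using dilated_form_bound[of f f 1 1] by simp

lemma dilated_form_diff:
  assumes f: "f \<in> L2" and g: "g \<in> L2" and a: "a > 0"
  shows "dilated_form a f f - dilated_form a g g
    = dilated_form a (\<lambda>x. f x - g x) f + dilated_form a g (\<lambda>x. f x - g x)"
proof -
  let ?I = "\<lambda>u v. \<integral>p. u (fst p) * K (a * fst p) (a * snd p) * v (snd p) \<partial>(lborel \<Otimes>\<^sub>M lborel)"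
  have fg: "(\<lambda>x. f x - g x) \<in> L2" using L2_diff[OF f g] .
  have "?I (\<lambda>x. f x - g x) f + ?I g (\<lambda>x. f x - g x)
      = (\<integral>p. (f (fst p) - g (fst p)) * K (a * fst p) (a * snd p) * f (snd p)
          + g (fst p) * K (a * fst p) (a * snd p) * (f (snd p) - g (snd p)) \<partial>(lborel \<Otimes>\<^sub>M lborel))"
    using dilated_form_integrable[OF fg f a] dilated_form_integrable[OF g fg a]
    by (rule Bochner_Integration.integral_add[symmetric])
  also have "\<dots> = (\<integral>p. f (fst p) * K (a * fst p) (a * snd p) * f (snd p)
      - g (fst p) * K (a * fst p) (a * snd p) * g (snd p) \<partial>(lborel \<Otimes>\<^sub>M lborel))"
    by (intro Bochner_Integration.integral_cong) (auto simp: algebra_simps)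
  also have "\<dots> = ?I f f - ?I g g"
    using dilated_form_integrable[OF f f a] dilated_form_integrable[OF g g a]
    by (rule Bochner_Integration.integral_diff)
  finally have split: "?I (\<lambda>x. f x - g x) f + ?I g (\<lambda>x. f x - g x) = ?I f f - ?I g g" .
  show ?thesis
    unfolding dilated_form_def right_diff_distrib[symmetric] distrib_left[symmetric] split ..
qed

lemma dilated_form_diff_bound:
  assumes f: "f \<in> L2" and g: "g \<in> L2" and a: "a > 0" and s: "s > 0"
  shows "\<bar>dilated_form a f f - dilated_form a g g\<bar>
    \<le> B * r * (2 * L2_norm_sq (\<lambda>x. f x - g x) / s + s * (L2_norm_sq f + L2_norm_sq g))"
proof -
  have fg: "(\<lambda>x. f x - g x) \<in> L2" using L2_diff[OF f g] .
  have "\<bar>dilated_form a (\<lambda>x. f x - g x) f\<bar>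
      \<le> B * r * ((1 / sqrt s)\<^sup>2 * L2_norm_sq (\<lambda>x. f x - g x) + L2_norm_sq f / (1 / sqrt s)\<^sup>2)"
    using s by (intro dilated_form_bound[OF fg f a]) simp
  also have "\<dots> = B * r * (L2_norm_sq (\<lambda>x. f x - g x) / s + s * L2_norm_sq f)"
    using s by (simp add: power_divide)
  finally have b1: "\<bar>dilated_form a (\<lambda>x. f x - g x) f\<bar> \<le> B * r * (L2_norm_sq (\<lambda>x. f x - g x) / s + s * L2_norm_sq f)" .
  have "\<bar>dilated_form a g (\<lambda>x. f x - g x)\<bar>
      \<le> B * r * ((sqrt s)\<^sup>2 * L2_norm_sq g + L2_norm_sq (\<lambda>x. f x - g x) / (sqrt s)\<^sup>2)"
    using s by (intro dilated_form_bound[OF g fg a]) simp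
  also have "\<dots> = B * r * (L2_norm_sq (\<lambda>x. f x - g x) / s + s * L2_norm_sq g)"
    using s by simp
  finally have b2: "\<bar>dilated_form a g (\<lambda>x. f x - g x)\<bar> \<le> B * r * (L2_norm_sq (\<lambda>x. f x - g x) / s + s * L2_norm_sq g)" .
  have "\<bar>dilated_form a f f - dilated_form a g g\<bar>
      \<le> \<bar>dilated_form a (\<lambda>x. f x - g x) f\<bar> + \<bar>dilated_form a g (\<lambda>x. f x - g x)\<bar>"
    unfolding dilated_form_diff[OF f g a] by (rule abs_triangle_ineq)
  also have "\<dots> \<le> B * r * (L2_norm_sq (\<lambda>x. f x - g x) / s + s * L2_norm_sq f)
      + B * r * (L2_norm_sq (\<lambda>x. f x - g x) / s + s * L2_norm_sq g)"
    using b1 b2 by (rule add_mono)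
  also have "\<dots> = B * r * (2 * L2_norm_sq (\<lambda>x. f x - g x) / s + s * (L2_norm_sq f + L2_norm_sq g))"
    by (simp add: field_simps)
  finally show ?thesis .
qed

lemma dilated_form_compact_support_bound:
  assumes g: "g \<in> L2" and a: "a > 0" and M: "\<And>x. \<bar>g x\<bar> \<le> M" "\<And>x. M < \<bar>x\<bar> \<Longrightarrow> g x = 0"
  shows "\<bar>dilated_form a g g\<bar> \<le> a * (B * M\<^sup>2 * (2 * M)\<^sup>2)"
proof -
  have "M \<ge> 0" using M(1) order.trans abs_ge_zero by blast
  define Sq where "Sq = {-M..M} \<times> {-M..M}"
  have Sq: "Sq \<in> sets (lborel \<Otimes>\<^sub>M lborel)" "emeasure (lborel \<Otimes>\<^sub>M lborel) Sq = ennreal ((2 * M)\<^sup>2)"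
    unfolding Sq_def using \<open>M \<ge> 0\<close>
    by (simp_all add: lborel.emeasure_pair_measure_Times ennreal_mult[symmetric] power2_eq_square)
  have "\<bar>g (fst p) * K (a * fst p) (a * snd p) * g (snd p)\<bar> \<le> B * M\<^sup>2 * indicator Sq p" for p
  proof (cases "p \<in> Sq")
    case True
    have "\<bar>g (fst p) * K (a * fst p) (a * snd p) * g (snd p)\<bar>
        = \<bar>K (a * fst p) (a * snd p)\<bar> * (\<bar>g (fst p)\<bar> * \<bar>g (snd p)\<bar>)"
      by (simp add: abs_mult)
    also have "\<dots> \<le> B * (M * M)"
      using kernel_bounded M(1) \<open>M \<ge> 0\<close> bound_nonneg by (intro mult_mono) (auto intro: mult_mono)
    finally show ?thesis using True by (simp add: power2_eq_square)
  next
    case False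
    then have "M < \<bar>fst p\<bar> \<or> M < \<bar>snd p\<bar>"
      unfolding Sq_def by (cases p) (auto simp: abs_le_iff)
    then show ?thesis using False M(2) by auto
  qed
  then have "\<bar>\<integral>p. g (fst p) * K (a * fst p) (a * snd p) * g (snd p) \<partial>(lborel \<Otimes>\<^sub>M lborel)\<bar>
      \<le> (\<integral>p. B * M\<^sup>2 * indicator Sq p \<partial>(lborel \<Otimes>\<^sub>M lborel))"
    using dilated_form_integrable[OF g g a] Sq by (intro integral_abs_bound_integral) auto
  also have "\<dots> = B * M\<^sup>2 * (2 * M)\<^sup>2"
    using Sq \<open>M \<ge> 0\<close> by (simp add: measure_def)
  finally show ?thesis
    unfolding dilated_form_def using a by (simp add: abs_mult)
qed

lemma dilated_form_near_approx:
  assumes f: "f \<in> L2" and g: "g \<in> L2" and a: "a > 0" and s: "0 < s" "s \<le> 1"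
    and close: "L2_norm_sq (\<lambda>x. f x - g x) \<le> s\<^sup>2"
  shows "\<bar>dilated_form a f f - dilated_form a g g\<bar> \<le> B * r * (3 * L2_norm_sq f + 4) * s"
proof -
  have "s\<^sup>2 \<le> 1" using s by (simp add: power_le_one)
  then have "L2_norm_sq g \<le> 2 * L2_norm_sq f + 2"
    using L2_norm_sq_le_diff[OF f g] close by linarith
  then have "s * (L2_norm_sq f + L2_norm_sq g) \<le> s * (3 * L2_norm_sq f + 2)"
    using s by (intro mult_left_mono) auto
  moreover have "2 * L2_norm_sq (\<lambda>x. f x - g x) / s \<le> 2 * s"
    using close s by (simp add: field_simps power2_eq_square)
  ultimately have "B * r * (2 * L2_norm_sq (\<lambda>x. f x - g x) / s + s * (L2_norm_sq f + L2_norm_sq g))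
      \<le> B * r * (2 * s + s * (3 * L2_norm_sq f + 2))"
    using bound_nonneg radius_pos by (intro mult_left_mono) auto
  also have "\<dots> = B * r * (3 * L2_norm_sq f + 4) * s"
    by (simp add: algebra_simps)
  finally show ?thesis
    using dilated_form_diff_bound[OF f g a s(1)] by linarith
qed

text \<open>Coarse dilations (\<open>a \<rightarrow> 0\<close>): a bounded function of bounded support has form of
  order \<open>a\<close>, and the form is continuous in \<open>f\<close> uniformly in \<open>a\<close>.\<close>
lemma dilated_form_tendsto_zero:
  assumes f: "f \<in> L2"
  shows "((\<lambda>a. dilated_form a f f) \<longlongrightarrow> 0) (at_right 0)"
proof (rule tendsto_of_eventually_le_mult)
  fix \<epsilon> :: real assume "\<epsilon> > 0"
  define s where "s = min \<epsilon> 1"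
  have s: "s > 0" "s \<le> 1" "s \<le> \<epsilon>" using \<open>\<epsilon> > 0\<close> by (auto simp: s_def)
  obtain g M where g: "g \<in> L2" "\<And>x. \<bar>g x\<bar> \<le> M" "\<And>x. M < \<bar>x\<bar> \<Longrightarrow> g x = 0"
    and close: "L2_norm_sq (\<lambda>x. f x - g x) < s\<^sup>2"
    using L2_bounded_support_approx[OF f, of "s\<^sup>2"] s by auto
  have "\<forall>\<^sub>F a in at_right 0. a * (B * M\<^sup>2 * (2 * M)\<^sup>2) \<le> \<epsilon>"
    using \<open>\<epsilon> > 0\<close> by real_asymp
  moreover have "\<forall>\<^sub>F a in at_right (0::real). a > 0"
    by (rule eventually_at_right_less)
  ultimately show "\<forall>\<^sub>F a in at_right 0. \<bar>dilated_form a f f - 0\<bar> \<le> (B * r * (3 * L2_norm_sq f + 4) + 1) * \<epsilon>"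
  proof eventually_elim
    case (elim a)
    have "\<bar>dilated_form a f f - dilated_form a g g\<bar> \<le> B * r * (3 * L2_norm_sq f + 4) * s"
      using close by (intro dilated_form_near_approx[OF f g(1) elim(2) s(1,2)]) simp
    also have "\<dots> \<le> B * r * (3 * L2_norm_sq f + 4) * \<epsilon>"
      using s bound_nonneg radius_pos L2_norm_sq_nonneg[of f] by (intro mult_left_mono) auto
    finally show ?case
      using dilated_form_compact_support_bound[OF g(1) elim(2) g(2,3)] elim(1) by (simp add: algebra_simps)
  qed
qed

lemma dilated_kernel_row_integral:
  assumes a: "a > 0"
  shows "(LINT y|lborel. K (a * x) (a * y)) = 1 / a"
proof -
  have "(LINT y|lborel. K (a * x) y) = \<bar>a\<bar> *\<^sub>R (LINT y|lborel. K (a * x) (0 + a * y))"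
    using a by (intro lborel_integral_real_affine) simp
  then show ?thesis using kernel_row_integral a by (simp add: field_simps)
qed

lemma
  assumes f: "f \<in> L2" and a: "a > 0"
  shows integrable_dilated_diagonal:
      "integrable (lborel \<Otimes>\<^sub>M lborel) (\<lambda>p. (f (fst p))\<^sup>2 * K (a * fst p) (a * snd p))"
    and dilated_diagonal_integral:
      "a * (\<integral>p. (f (fst p))\<^sup>2 * K (a * fst p) (a * snd p) \<partial>(lborel \<Otimes>\<^sub>M lborel)) = L2_norm_sq f"
proof -
  have [measurable]: "f \<in> borel_measurable borel" using f by (simp add: L2_iff)
  have \<rho>: "r / a \<ge> 0" using a radius_pos by simp
  have "integrable (lborel \<Otimes>\<^sub>M lborel) (\<lambda>p. band (r / a) (fst p) (snd p) * (f (fst p))\<^sup>2)"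
    using integrable_band_fst[OF L2_integrable_square[OF f] \<rho>] by (simp add: mult.commute)
  from dilated_integral_bound(1)[OF f a zero_less_one _ this]
  show I: "integrable (lborel \<Otimes>\<^sub>M lborel) (\<lambda>p. (f (fst p))\<^sup>2 * K (a * fst p) (a * snd p))"
    by (simp add: power2_eq_square mult_ac)
  have "(\<integral>p. (f (fst p))\<^sup>2 * K (a * fst p) (a * snd p) \<partial>(lborel \<Otimes>\<^sub>M lborel))
      = (LINT x|lborel. LINT y|lborel. (f x)\<^sup>2 * K (a * x) (a * y))"
    using lborel_pair.integral_fst'[OF I] by simp
  also have "\<dots> = (LINT x|lborel. (f x)\<^sup>2 / a)"
    using dilated_kernel_row_integral[OF a] by simp
  finally show "a * (\<integral>p. (f (fst p))\<^sup>2 * K (a * fst p) (a * snd p) \<partial>(lborel \<Otimes>\<^sub>M lborel)) = L2_norm_sq f"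
    using a by (simp add: L2_norm_sq_def)
qed

text \<open>Fine dilations (\<open>a \<rightarrow> \<infinity>\<close>): since the dilated rows integrate to \<open>1/a\<close>, the
  deviation of the form from \<open>\<parallel>f\<parallel>\<^sup>2\<close> only involves differences \<open>f(y) - f(x)\<close> with
  \<open>\<bar>x - y\<bar> \<le> r/a\<close>.\<close>
lemma dilated_form_minus_norm:
  assumes f: "f \<in> L2" and a: "a > 0"
  shows "dilated_form a f f - L2_norm_sq f
    = a * (\<integral>p. f (fst p) * K (a * fst p) (a * snd p) * (f (snd p) - f (fst p)) \<partial>(lborel \<Otimes>\<^sub>M lborel))"
proof -
  have "(\<integral>p. f (fst p) * K (a * fst p) (a * snd p) * (f (snd p) - f (fst p)) \<partial>(lborel \<Otimes>\<^sub>M lborel))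
      = (\<integral>p. f (fst p) * K (a * fst p) (a * snd p) * f (snd p)
          - (f (fst p))\<^sup>2 * K (a * fst p) (a * snd p) \<partial>(lborel \<Otimes>\<^sub>M lborel))"
    by (intro Bochner_Integration.integral_cong) (auto simp: algebra_simps power2_eq_square)
  also have "\<dots> = (\<integral>p. f (fst p) * K (a * fst p) (a * snd p) * f (snd p) \<partial>(lborel \<Otimes>\<^sub>M lborel))
      - (\<integral>p. (f (fst p))\<^sup>2 * K (a * fst p) (a * snd p) \<partial>(lborel \<Otimes>\<^sub>M lborel))"
    using dilated_form_integrable[OF f f a] integrable_dilated_diagonal[OF f a]
    by (rule Bochner_Integration.integral_diff)
  finally have split: "(\<integral>p. f (fst p) * K (a * fst p) (a * snd p) * (f (snd p) - f (fst p)) \<partial>(lborel \<Otimes>\<^sub>M lborel))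
      = (\<integral>p. f (fst p) * K (a * fst p) (a * snd p) * f (snd p) \<partial>(lborel \<Otimes>\<^sub>M lborel))
      - (\<integral>p. (f (fst p))\<^sup>2 * K (a * fst p) (a * snd p) \<partial>(lborel \<Otimes>\<^sub>M lborel))" .
  show ?thesis
    unfolding dilated_form_def split unfolding right_diff_distrib dilated_diagonal_integral[OF f a] ..
qed

lemma dilated_form_near_norm:
  assumes f: "f \<in> L2" and a: "a > 0" and t: "t > 0"
    and modulus: "\<And>h. \<bar>h\<bar> \<le> r / a \<Longrightarrow> L2_modulus f h \<le> \<eta>"
  shows "\<bar>dilated_form a f f - L2_norm_sq f\<bar> \<le> B * r * (t\<^sup>2 * L2_norm_sq f + \<eta> / t\<^sup>2)"
proof -
  have [measurable]: "f \<in> borel_measurable borel" using f by (simp add: L2_iff)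
  have \<rho>: "r / a \<ge> 0" using a radius_pos by simp
  have "\<bar>dilated_form a f f - L2_norm_sq f\<bar>
      \<le> B * r * t\<^sup>2 * L2_norm_sq f + B * a / (2 * t\<^sup>2)
         * (\<integral>p. band (r / a) (fst p) (snd p) * (f (snd p) - f (fst p))\<^sup>2 \<partial>(lborel \<Otimes>\<^sub>M lborel))"
  proof -
    have "(\<lambda>p. f (snd p) - f (fst p)) \<in> borel_measurable (lborel \<Otimes>\<^sub>M lborel)"
      by measurable
    from dilated_integral_bound(2)[OF f a t this integrable_band_square_diff[OF f \<rho>]]
    show ?thesis
      unfolding dilated_form_minus_norm[OF f a] using a by (simp add: abs_mult)
  qed
  also have "\<dots> \<le> B * r * t\<^sup>2 * L2_norm_sq f + B * a / (2 * t\<^sup>2) * (2 * (r / a) * \<eta>)"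
    using integral_band_square_diff_le[OF f \<rho> modulus] a t bound_nonneg
    by (intro add_left_mono mult_left_mono) auto
  also have "\<dots> = B * r * (t\<^sup>2 * L2_norm_sq f + \<eta> / t\<^sup>2)"
    using a t by (simp add: field_simps)
  finally show ?thesis .
qed

lemma dilated_form_tendsto_norm:
  assumes f: "f \<in> L2"
  shows "((\<lambda>a. dilated_form a f f) \<longlongrightarrow> L2_norm_sq f) at_top"
proof (rule tendsto_of_eventually_le_mult)
  fix \<epsilon> :: real assume "\<epsilon> > 0"
  then obtain \<delta> where \<delta>: "\<delta> > 0" "\<And>h. \<bar>h\<bar> < \<delta> \<Longrightarrow> L2_modulus f h \<le> \<epsilon>\<^sup>2"
    using L2_translation_continuous[OF f] unfolding translation_continuous_def by (metis zero_less_power)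
  have "\<forall>\<^sub>F a in at_top. a > max 0 (r / \<delta>)"
    by (rule eventually_gt_at_top)
  then show "\<forall>\<^sub>F a in at_top. \<bar>dilated_form a f f - L2_norm_sq f\<bar> \<le> B * r * (L2_norm_sq f + 1) * \<epsilon>"
  proof (rule eventually_mono)
    fix a assume "a > max 0 (r / \<delta>)"
    then have a: "a > 0" and "r / \<delta> < a" by auto
    then have "r / a < \<delta>"
      using \<delta>(1) by (simp add: divide_less_eq mult.commute)
    then have "L2_modulus f h \<le> \<epsilon>\<^sup>2" if "\<bar>h\<bar> \<le> r / a" for h
      using \<delta>(2) that by simp
    from dilated_form_near_norm[OF f a _ this, of "sqrt \<epsilon>"]
    show "\<bar>dilated_form a f f - L2_norm_sq f\<bar> \<le> B * r * (L2_norm_sq f + 1) * \<epsilon>"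
      using \<open>\<epsilon> > 0\<close> by (simp add: power2_eq_square algebra_simps)
  qed
qed

end

section \<open>Lagrange interpolation\<close>

definition reproduces_monomials :: "'a set \<Rightarrow> ('a \<Rightarrow> real) \<Rightarrow> ('a \<Rightarrow> real) \<Rightarrow> real \<Rightarrow> nat \<Rightarrow> bool" where
  "reproduces_monomials W x w y N \<longleftrightarrow> (\<forall>\<alpha><N. (\<Sum>j\<in>W. w j * x j ^ \<alpha>) = y ^ \<alpha>)"

lemma reproduces_monomials_poly:
  assumes "reproduces_monomials W x w y N" "degree p < N"
  shows "(\<Sum>j\<in>W. w j * poly p (x j)) = poly p y"
proof -
  have "(\<Sum>j\<in>W. w j * poly p (x j)) = (\<Sum>j\<in>W. \<Sum>i\<le>degree p. coeff p i * (w j * x j ^ i))"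
    by (simp add: poly_altdef sum_distrib_left algebra_simps)
  also have "\<dots> = (\<Sum>i\<le>degree p. coeff p i * (\<Sum>j\<in>W. w j * x j ^ i))"
    by (subst sum.swap) (simp add: sum_distrib_left)
  also have "\<dots> = (\<Sum>i\<le>degree p. coeff p i * y ^ i)"
    using assms unfolding reproduces_monomials_def by (intro sum.cong refl) auto
  also have "\<dots> = poly p y" by (simp add: poly_altdef)
  finally show ?thesis .
qed

lemma reproduces_monomialsI:
  assumes "\<And>p. degree p < N \<Longrightarrow> (\<Sum>j\<in>W. w j * poly p (x j)) = poly p y"
  shows "reproduces_monomials W x w y N"
  unfolding reproduces_monomials_def
proof (intro allI impI)
  fix \<alpha> assume "\<alpha> < N"
  then have "degree (monom (1::real) \<alpha>) < N" by (simp add: degree_monom_eq)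
  from assms[OF this] show "(\<Sum>j\<in>W. w j * x j ^ \<alpha>) = y ^ \<alpha>" by (simp add: poly_monom)
qed

definition node_poly :: "'a set \<Rightarrow> ('a \<Rightarrow> real) \<Rightarrow> 'a \<Rightarrow> real poly" where
  "node_poly W x j = (\<Prod>l\<in>W - {j}. [:- x l, 1:])"

lemma poly_node_poly: "poly (node_poly W x j) z = (\<Prod>l\<in>W - {j}. z - x l)"
  by (simp add: node_poly_def poly_prod)

lemma degree_node_poly: "finite W \<Longrightarrow> j \<in> W \<Longrightarrow> degree (node_poly W x j) = card W - 1"
  unfolding node_poly_def by (subst degree_prod_sum_eq) (auto simp: card_Diff_singleton)

lemma poly_node_poly_eq_0: "finite W \<Longrightarrow> i \<in> W \<Longrightarrow> i \<noteq> j \<Longrightarrow> poly (node_poly W x j) (x i) = 0"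
  unfolding poly_node_poly by (intro prod_zero) auto

lemma poly_node_poly_self: "finite W \<Longrightarrow> inj_on x W \<Longrightarrow> j \<in> W \<Longrightarrow> poly (node_poly W x j) (x j) \<noteq> 0"
  unfolding poly_node_poly by (subst prod_zero_iff) (auto simp: inj_on_def)

definition lagrange_weight :: "'a set \<Rightarrow> ('a \<Rightarrow> real) \<Rightarrow> real \<Rightarrow> 'a \<Rightarrow> real" where
  "lagrange_weight W x y j = (\<Prod>l\<in>W - {j}. (y - x l) / (x j - x l))"

lemma lagrange_weight_eq: "lagrange_weight W x y j = poly (node_poly W x j) y / poly (node_poly W x j) (x j)"
  unfolding lagrange_weight_def poly_node_poly by (simp add: prod_dividef)

lemma reproduces_monomials_unique:
  assumes W: "finite W" "inj_on x W" "card W \<le> N"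
    and w1: "reproduces_monomials W x w1 y N" and w2: "reproduces_monomials W x w2 y N" and i: "i \<in> W"
  shows "w1 i = w2 i"
proof -
  have "card W > 0" using W(1) i card_gt_0_iff by blast
  then have "degree (node_poly W x i) < N"
    using W(3) degree_node_poly[OF W(1) i, of x] by linarith
  note reproduce = reproduces_monomials_poly[OF _ this]
  have "(\<Sum>j\<in>W. w j * poly (node_poly W x i) (x j)) = w i * poly (node_poly W x i) (x i)" for w
    using W(1) i poly_node_poly_eq_0[OF W(1)] by (subst sum.remove[OF W(1) i]) (auto intro!: sum.neutral)
  then have "w1 i * poly (node_poly W x i) (x i) = w2 i * poly (node_poly W x i) (x i)"
    using reproduce[OF w1] reproduce[OF w2] by metis
  then show ?thesis using poly_node_poly_self[OF W(1,2) i] by simp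
qed

lemma lagrange_weight_reproduces_monomials:
  assumes W: "finite W" "inj_on x W" "N \<le> card W"
  shows "reproduces_monomials W x (lagrange_weight W x y) y N"
proof (rule reproduces_monomialsI)
  fix p :: "real poly" assume "degree p < N"
  define q where "q = (\<Sum>j\<in>W. smult (poly p (x j) / poly (node_poly W x j) (x j)) (node_poly W x j))"
  have "poly q (x i) = poly p (x i)" if i: "i \<in> W" for i
  proof -
    have "poly q (x i) = (\<Sum>j\<in>W. poly p (x j) / poly (node_poly W x j) (x j) * poly (node_poly W x j) (x i))"
      by (simp add: q_def poly_sum)
    also have "\<dots> = poly p (x i)"
    proof -
      have "poly (node_poly W x j) (x i) = 0" if "j \<in> W - {i}" for j
        using poly_node_poly_eq_0[OF W(1) i] that by auto
      then show ?thesis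
        using poly_node_poly_self[OF W(1,2) i] by (subst sum.remove[OF W(1) i]) (auto intro!: sum.neutral)
    qed
    finally show ?thesis .
  qed
  moreover have "degree q < card W"
  proof -
    have "degree q \<le> card W - 1"
      unfolding q_def using W(1) degree_node_poly[OF W(1)]
      by (intro degree_sum_le) (auto intro: order.trans[OF degree_smult_le])
    then show ?thesis using \<open>degree p < N\<close> W(3) by linarith
  qed
  ultimately have "p = q"
    using \<open>degree p < N\<close> W card_image[OF W(2)] by (intro poly_eqI_degree[of "x ` W"]) auto
  then have "poly p y = poly q y" by simp
  then show "(\<Sum>j\<in>W. lagrange_weight W x y j * poly p (x j)) = poly p y"
    by (simp add: q_def poly_sum lagrange_weight_eq mult.commute)
qed

section \<open>The mesh and the subdivision matrix\<close>

definition stencil :: "nat \<Rightarrow> int \<Rightarrow> int set" where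
  "stencil n q = {q - int n + 1 .. q + int n}"

lemma finite_stencil[simp]: "finite (stencil n q)" by (simp add: stencil_def)

lemma card_stencil: "card (stencil n q) = 2 * n"
  unfolding stencil_def by simp

lemma stencil_shift_iff: "j \<in> stencil n q \<longleftrightarrow> j - q \<in> stencil n 0"
  unfolding stencil_def by auto

lemma stencil_translate: "(\<lambda>j. j + s) ` stencil n q = stencil n (q + s)"
proof
  show "(\<lambda>j. j + s) ` stencil n q \<subseteq> stencil n (q + s)" by (auto simp: stencil_def)
  show "stencil n (q + s) \<subseteq> (\<lambda>j. j + s) ` stencil n q"
  proof
    fix j assume "j \<in> stencil n (q + s)"
    then have "j - s \<in> stencil n q" by (auto simp: stencil_def)
    then show "j \<in> (\<lambda>j. j + s) ` stencil n q" by (intro image_eqI[of _ _ "j - s"]) auto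
  qed
qed

definition regular_mask :: "nat \<Rightarrow> int \<Rightarrow> real" where
  "regular_mask n d = (if d \<in> stencil n 0 then lagrange_weight (stencil n 0) real_of_int (1/2) d else 0)"

lemma int_even_odd_cases: fixes i :: int obtains q where "i = 2 * q" | q where "i = 2 * q + 1"
proof -
  have "i mod 2 = 0 \<or> i mod 2 = 1" by auto
  moreover have "i = 2 * (i div 2) + i mod 2" by simp
  ultimately show ?thesis using that by fastforce
qed

lemma pl_interp_eq:
  assumes s: "strict_mono s" and m: "s m \<le> x" "x < s (m + 1)"
  shows "pl_interp s c x = c m + (c (m + 1) - c m) * (x - s m) / (s (m + 1) - s m)"
proof -
  have "(THE m. s m \<le> x \<and> x < s (m + 1)) = m"
  proof (rule the_equality)
    show "s m \<le> x \<and> x < s (m + 1)" using m by simp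
    fix m' assume m': "s m' \<le> x \<and> x < s (m' + 1)"
    have "s m' < s (m + 1)" "s m < s (m' + 1)"
      using m m' by linarith+
    then have "m' < m + 1" "m < m' + 1"
      using strict_mono_less[OF s] by blast+
    then show "m' = m" by linarith
  qed
  then show ?thesis unfolding pl_interp_def Let_def by simp
qed

locale dd_scheme =
  fixes n :: nat and hl hr :: real
  assumes n_pos: "n \<ge> 1" and hl_pos: "hl > 0" and hr_pos: "hr > 0"
begin

abbreviation "t \<equiv> mesh hl hr"
abbreviation "P \<equiv> DD_P n hl hr"

lemma mesh_nonneg: "k \<ge> 0 \<Longrightarrow> t k = real_of_int k * hr"
  by (simp add: mesh_def)

lemma mesh_nonpos: "k \<le> 0 \<Longrightarrow> t k = real_of_int k * hl"
  by (cases "k = 0") (auto simp: mesh_def)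

lemma strict_mono_mesh: "strict_mono t"
proof (rule strict_monoI)
  fix k m :: int assume "k < m"
  consider "0 \<le> k" | "m \<le> 0" | "k < 0" "0 < m" by linarith
  then show "t k < t m"
  proof cases
    case 1
    then show ?thesis using \<open>k < m\<close> hr_pos by (simp add: mesh_nonneg)
  next
    case 2
    then show ?thesis using \<open>k < m\<close> hl_pos by (simp add: mesh_nonpos)
  next
    case 3
    then have "t k < 0" "0 < t m"
      using hl_pos hr_pos by (simp_all add: mesh_nonpos mesh_nonneg mult_neg_pos)
    then show ?thesis by linarith
  qed
qed

lemma mesh_less_iff [simp]: "t k < t m \<longleftrightarrow> k < m"
  using strict_mono_less[OF strict_mono_mesh] .

lemma mesh_le_iff [simp]: "t k \<le> t m \<longleftrightarrow> k \<le> m"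
  using strict_mono_less_eq[OF strict_mono_mesh] .

lemma inj_on_mesh: "inj_on t A"
  using strict_mono_imp_inj_on[OF strict_mono_mesh] inj_on_subset by blast

lemma mesh_zero [simp]: "t 0 = 0"
  by (simp add: mesh_def)

lemma mesh_dyadic_scale: "t (2 ^ J * m) = 2 ^ J * t m"
  by (auto simp: mesh_def zero_less_mult_iff mult_less_0_iff)

definition hmax :: real where "hmax = max hl hr"

lemma mesh_diff_le: "a \<le> b \<Longrightarrow> t b - t a \<le> real_of_int (b - a) * hmax"
proof -
  assume ab: "a \<le> b"
  have H: "hl \<le> hmax" "hr \<le> hmax" unfolding hmax_def by auto
  consider "0 \<le> a" | "b \<le> 0" | "a < 0" "0 < b" by linarith
  then show ?thesis
  proof cases
    case 1
    then have "t b - t a = real_of_int (b - a) * hr" using ab by (simp add: mesh_nonneg algebra_simps)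
    also have "\<dots> \<le> real_of_int (b - a) * hmax" using ab H by (intro mult_left_mono) auto
    finally show ?thesis .
  next
    case 2
    then have "t b - t a = real_of_int (b - a) * hl" using ab by (simp add: mesh_nonpos algebra_simps)
    also have "\<dots> \<le> real_of_int (b - a) * hmax" using ab H by (intro mult_left_mono) auto
    finally show ?thesis .
  next
    case 3
    then have "t b - t a = real_of_int b * hr + real_of_int (- a) * hl" by (simp add: mesh_nonneg mesh_nonpos)
    also have "\<dots> \<le> real_of_int b * hmax + real_of_int (- a) * hmax"
      using 3 H by (intro add_mono mult_left_mono) auto
    also have "\<dots> = real_of_int (b - a) * hmax" by (simp add: algebra_simps)
    finally show ?thesis .
  qed
qed

lemma hmax_pos: "hmax > 0" unfolding hmax_def using hl_pos by simp

lemma DD_P_even: "P (2 * q) j = (if j = q then 1 else 0)"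
  by (simp add: DD_P_def)

lemma DD_P_odd:
  "P (2 * q + 1) j = (if j \<in> stencil n q then lagrange_weight (stencil n q) t (t (2 * q + 1) / 2) j else 0)"
proof -
  define y where "y = t (2 * q + 1) / 2"
  define w0 where "w0 j = (if j \<in> stencil n q then lagrange_weight (stencil n q) t y j else 0)" for j
  define admissible where "admissible w \<longleftrightarrow>
    (\<forall>j. j \<notin> stencil n q \<longrightarrow> w j = 0) \<and> reproduces_monomials (stencil n q) t w y (2 * n)" for w
  have w0: "admissible w0"
    using lagrange_weight_reproduces_monomials[of "stencil n q" t "2 * n" y]
    by (auto simp: admissible_def w0_def reproduces_monomials_def inj_on_mesh card_stencil)
  have "w = w0" if "admissible w" for w
  proof
    fix j
    show "w j = w0 j"
      using that w0 reproduces_monomials_unique[of "stencil n q" t "2 * n" w y w0 j]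
      by (cases "j \<in> stencil n q") (auto simp: admissible_def card_stencil inj_on_mesh w0_def)
  qed
  with w0 have "(THE w. admissible w) = w0"
    by (intro the_equality)
  moreover have "P (2 * q + 1) = (THE w. admissible w)"
    by (simp add: DD_P_def admissible_def reproduces_monomials_def stencil_def y_def fun_eq_iff)
  ultimately show ?thesis by (simp add: w0_def y_def)
qed

lemma DD_P_odd_row_sum: "(\<Sum>j\<in>stencil n q. P (2 * q + 1) j) = 1"
proof -
  have "reproduces_monomials (stencil n q) t (lagrange_weight (stencil n q) t (t (2 * q + 1) / 2)) (t (2 * q + 1) / 2) (2 * n)"
    by (rule lagrange_weight_reproduces_monomials) (auto simp: inj_on_mesh card_stencil)
  moreover have "0 < 2 * n" using n_pos by simp
  ultimately have "(\<Sum>j\<in>stencil n q. lagrange_weight (stencil n q) t (t (2 * q + 1) / 2) j * t j ^ 0) = (t (2 * q + 1) / 2) ^ 0"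
    unfolding reproduces_monomials_def by blast
  then have "(\<Sum>j\<in>stencil n q. lagrange_weight (stencil n q) t (t (2 * q + 1) / 2) j) = 1" by simp
  moreover have "(\<Sum>j\<in>stencil n q. P (2 * q + 1) j) = (\<Sum>j\<in>stencil n q. lagrange_weight (stencil n q) t (t (2 * q + 1) / 2) j)"
    by (intro sum.cong refl) (simp add: DD_P_odd)
  ultimately show ?thesis by simp
qed

lemma DD_P_row_sum: "(\<Sum>j\<in>stencil n (i div 2). P i j) = 1"
proof -
  obtain q where "i = 2 * q \<or> i = 2 * q + 1"
    by (metis int_even_odd_cases)
  moreover have "q \<in> stencil n q"
    using n_pos by (simp add: stencil_def)
  ultimately show ?thesis
    using DD_P_odd_row_sum[of q] by (auto simp: DD_P_even)
qed

lemma DD_P_odd_regular: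
  assumes h: "h > 0" and tl: "\<And>l. l \<in> stencil n q \<Longrightarrow> t l = h * real_of_int l"
    and ty: "t (2 * q + 1) = h * real_of_int (2 * q + 1)"
  shows "P (2 * q + 1) j = regular_mask n (j - q)"
proof (cases "j \<in> stencil n q")
  case False
  then show ?thesis using stencil_shift_iff[of j n q] by (simp add: DD_P_odd regular_mask_def)
next
  case True
  then have j0: "j - q \<in> stencil n 0" using stencil_shift_iff by blast
  have img: "(\<lambda>l. l + q) ` (stencil n 0 - {j - q}) = stencil n q - {j}"
    using stencil_translate[of q n 0] by (simp add: image_set_diff inj_def)
  have "lagrange_weight (stencil n q) t (t (2 * q + 1) / 2) j = (\<Prod>l\<in>stencil n q - {j}. (t (2 * q + 1) / 2 - t l) / (t j - t l))"
    by (simp add: lagrange_weight_def)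
  also have "\<dots> = (\<Prod>l\<in>stencil n q - {j}. (real_of_int (2 * q + 1) / 2 - real_of_int l) / (real_of_int j - real_of_int l))"
  proof (intro prod.cong refl)
    fix l assume l: "l \<in> stencil n q - {j}"
    have "(t (2 * q + 1) / 2 - t l) / (t j - t l) = (h * (real_of_int (2 * q + 1) / 2 - real_of_int l)) / (h * (real_of_int j - real_of_int l))"
      using tl[of l] tl[OF True] l ty by (simp add: algebra_simps)
    also have "\<dots> = (real_of_int (2 * q + 1) / 2 - real_of_int l) / (real_of_int j - real_of_int l)"
      using h by simp
    finally show "(t (2 * q + 1) / 2 - t l) / (t j - t l) = (real_of_int (2 * q + 1) / 2 - real_of_int l) / (real_of_int j - real_of_int l)" .
  qed
  also have "\<dots> = (\<Prod>l\<in>(\<lambda>l. l + q) ` (stencil n 0 - {j - q}). (real_of_int (2 * q + 1) / 2 - real_of_int l) / (real_of_int j - real_of_int l))"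
    unfolding img ..
  also have "\<dots> = (\<Prod>l\<in>stencil n 0 - {j - q}. (real_of_int (2 * q + 1) / 2 - real_of_int (l + q)) / (real_of_int j - real_of_int (l + q)))"
    by (subst prod.reindex) (auto simp: inj_on_def)
  also have "\<dots> = (\<Prod>l\<in>stencil n 0 - {j - q}. (1 / 2 - real_of_int l) / (real_of_int (j - q) - real_of_int l))"
    by (intro prod.cong refl) (simp add: field_simps)
  also have "\<dots> = regular_mask n (j - q)"
    using j0 by (simp add: regular_mask_def lagrange_weight_def)
  finally show ?thesis using True by (simp add: DD_P_odd)
qed

text \<open>Rows whose stencil lies on one side of the origin see a uniform mesh, so they are integer
  translates of a single mask.\<close>
definition regular_row :: "int \<Rightarrow> bool" where
  "regular_row q \<longleftrightarrow> (\<forall>j. P (2 * q + 1) j = regular_mask n (j - q))"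

lemma regular_row_right: "q \<ge> int n - 1 \<Longrightarrow> regular_row q"
  unfolding regular_row_def
  using n_pos by (intro allI DD_P_odd_regular[OF hr_pos]) (auto simp: stencil_def mesh_nonneg mult.commute)

lemma regular_row_left: "q + int n \<le> -1 \<Longrightarrow> regular_row q"
  unfolding regular_row_def
  using n_pos by (intro allI DD_P_odd_regular[OF hl_pos]) (auto simp: stencil_def mesh_nonpos mult.commute)

section \<open>Iterates\<close>

abbreviation "subdiv \<equiv> DD_apply n hl hr"
abbreviation "subdiv_iter \<equiv> DD_iter n hl hr"

definition halfwidth :: int where "halfwidth = 2 * int n - 1"

lemma halfwidth_pos: "halfwidth \<ge> 1" using n_pos by (simp add: halfwidth_def)

lemma subdiv_eq_stencil_sum: "subdiv v i = (\<Sum>j\<in>stencil n (i div 2). P i j * v j)"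
  unfolding DD_apply_def stencil_def ..

lemma subdiv_iter_0: "subdiv_iter 0 k = (\<lambda>m. if m = k then 1 else 0)"
  by (simp add: DD_iter_def)

lemma subdiv_iter_Suc: "subdiv_iter (Suc J) k = subdiv (subdiv_iter J k)"
  by (simp add: DD_iter_def)

lemma subdiv_even: "subdiv v (2 * q) = v q"
proof -
  have q: "q \<in> stencil n q" using n_pos by (simp add: stencil_def)
  have "subdiv v (2 * q) = (\<Sum>j\<in>stencil n q. (if j = q then 1 else 0) * v j)"
    unfolding subdiv_eq_stencil_sum by (simp add: DD_P_even)
  also have "\<dots> = (\<Sum>j\<in>stencil n q. if j = q then v j else 0)" by (intro sum.cong) auto
  also have "\<dots> = v q" using q by (simp only: sum.delta finite_stencil if_True)
  finally show ?thesis .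
qed

lemma subdiv_odd: "subdiv v (2 * q + 1) = (\<Sum>j\<in>stencil n q. P (2 * q + 1) j * v j)"
proof -
  have "(2 * q + 1) div 2 = q" by simp
  then show ?thesis unfolding subdiv_eq_stencil_sum by simp
qed

lemma le_pow2_mult: "(2::int) ^ J * z \<ge> z" if "z \<ge> 0" for z
proof -
  have "(2::int) ^ J \<ge> 1" by simp
  then show ?thesis using that by (simp add: mult_le_cancel_right1)
qed

lemma subdiv_iter_support:
  "subdiv_iter J k m \<noteq> 0 \<Longrightarrow> 2 ^ J * (k - halfwidth) + halfwidth \<le> m \<and> m \<le> 2 ^ J * (k + halfwidth) - halfwidth"
proof (induction J arbitrary: m)
  case 0
  then show ?case by (simp add: subdiv_iter_0 split: if_splits)
next
  case (Suc J)
  define lo where "lo = (2::int) ^ J * (k - halfwidth) + halfwidth"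
  define hi where "hi = (2::int) ^ J * (k + halfwidth) - halfwidth"
  have lo': "(2::int) ^ Suc J * (k - halfwidth) + halfwidth = 2 * lo - halfwidth" unfolding lo_def by (simp add: algebra_simps)
  have hi': "(2::int) ^ Suc J * (k + halfwidth) - halfwidth = 2 * hi + halfwidth" unfolding hi_def by (simp add: algebra_simps)
  have IH: "subdiv_iter J k j \<noteq> 0 \<Longrightarrow> lo \<le> j \<and> j \<le> hi" for j using Suc.IH unfolding lo_def hi_def .
  have ne: "subdiv (subdiv_iter J k) m \<noteq> 0" using Suc.prems by (simp add: subdiv_iter_Suc)
  consider q where "m = 2 * q" | q where "m = 2 * q + 1" by (rule int_even_odd_cases)
  then show ?case
  proof cases
    case 1
    then have "subdiv_iter J k q \<noteq> 0" using ne by (simp add: subdiv_even)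
    then have "lo \<le> q \<and> q \<le> hi" by (rule IH)
    then show ?thesis unfolding lo' hi' 1 using halfwidth_pos by linarith
  next
    case 2
    then have "(\<Sum>j\<in>stencil n q. P (2 * q + 1) j * subdiv_iter J k j) \<noteq> 0" using ne by (simp add: subdiv_odd)
    then obtain j where j: "j \<in> stencil n q" "subdiv_iter J k j \<noteq> 0" by (metis (no_types, lifting) mult_zero_right sum.neutral)
    then have lj: "lo \<le> j \<and> j \<le> hi" using IH by blast
    have "q - int n + 1 \<le> j" "j \<le> q + int n" using j(1) by (auto simp: stencil_def)
    then show ?thesis unfolding lo' hi' 2 using lj halfwidth_def by linarith
  qed
qed

lemma subdiv_iter_support_index: "subdiv_iter J k m \<noteq> 0 \<Longrightarrow> \<bar>k\<bar> \<le> \<bar>m\<bar> + 2 * halfwidth"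
proof -
  assume a: "subdiv_iter J k m \<noteq> 0"
  from subdiv_iter_support[OF a] have l: "2 ^ J * (k - halfwidth) + halfwidth \<le> m" and u: "m \<le> 2 ^ J * (k + halfwidth) - halfwidth" by auto
  have "k \<le> \<bar>m\<bar> + 2 * halfwidth"
  proof (cases "k - halfwidth \<ge> 0")
    case True then show ?thesis using le_pow2_mult[OF True, of J] l abs_ge_self[of m] halfwidth_pos by linarith
  qed (use abs_ge_self[of m] halfwidth_pos l in linarith)
  moreover have "- k \<le> \<bar>m\<bar> + 2 * halfwidth"
  proof (cases "-(k + halfwidth) \<ge> 0")
    case True
    have "2 ^ J * (- (k + halfwidth)) = - (2 ^ J * (k + halfwidth))" by (rule mult_minus_right)
    then show ?thesis using le_pow2_mult[OF True, of J] u abs_ge_minus_self[of m] halfwidth_pos by linarith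
  qed (use abs_ge_minus_self[of m] halfwidth_pos u in linarith)
  ultimately show ?thesis by linarith
qed

lemma finite_subdiv_iter_support: "finite {k. subdiv_iter J k m \<noteq> 0}"
proof (rule finite_subset)
  show "{k. subdiv_iter J k m \<noteq> 0} \<subseteq> {-(\<bar>m\<bar> + 2 * halfwidth) .. \<bar>m\<bar> + 2 * halfwidth}"
    using subdiv_iter_support_index by fastforce
qed simp

lemma subdiv_iter_partition_of_unity:
  "finite F \<Longrightarrow> {k. subdiv_iter J k m \<noteq> 0} \<subseteq> F \<Longrightarrow> (\<Sum>k\<in>F. subdiv_iter J k m) = 1"
proof (induction J arbitrary: m F)
  case 0
  then have "m \<in> F" by (auto simp: subdiv_iter_0)
  then show ?case using 0 by (simp add: subdiv_iter_0)
next
  case (Suc J)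
  define F' where "F' = F \<union> (\<Union>j\<in>stencil n (m div 2). {k. subdiv_iter J k j \<noteq> 0})"
  have fF': "finite F'" unfolding F'_def using Suc.prems finite_subdiv_iter_support by auto
  have "(\<Sum>k\<in>F. subdiv_iter (Suc J) k m) = (\<Sum>k\<in>F'. subdiv_iter (Suc J) k m)"
    using Suc.prems by (intro sum.mono_neutral_left fF') (auto simp: F'_def)
  also have "\<dots> = (\<Sum>k\<in>F'. \<Sum>j\<in>stencil n (m div 2). P m j * subdiv_iter J k j)"
    by (simp add: subdiv_iter_Suc subdiv_eq_stencil_sum)
  also have "\<dots> = (\<Sum>j\<in>stencil n (m div 2). P m j * (\<Sum>k\<in>F'. subdiv_iter J k j))"
    by (subst sum.swap) (simp add: sum_distrib_left)
  also have "\<dots> = (\<Sum>j\<in>stencil n (m div 2). P m j)"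
  proof (intro sum.cong refl)
    fix j assume j: "j \<in> stencil n (m div 2)"
    have "(\<Sum>k\<in>F'. subdiv_iter J k j) = 1" using Suc.IH[OF fF'] j unfolding F'_def by blast
    then show "P m j * (\<Sum>k\<in>F'. subdiv_iter J k j) = P m j" by simp
  qed
  also have "\<dots> = 1"
    by (rule DD_P_row_sum)
  finally show ?case .
qed

lemma subdiv_odd_regular_translate:
  assumes v': "\<And>i. v' i = v (i - s)" and reg: "regular_row q" "regular_row (q + s)"
  shows "subdiv v' (2 * (q + s) + 1) = subdiv v (2 * q + 1)"
proof -
  have "subdiv v' (2 * (q + s) + 1) = (\<Sum>j\<in>stencil n (q + s). regular_mask n (j - (q + s)) * v (j - s))"
    unfolding subdiv_odd using reg(2) by (simp add: regular_row_def v')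
  also have "\<dots> = (\<Sum>j\<in>(\<lambda>j. j + s) ` stencil n q. regular_mask n (j - (q + s)) * v (j - s))"
    unfolding stencil_translate ..
  also have "\<dots> = (\<Sum>j\<in>stencil n q. regular_mask n (j - q) * v j)"
    by (subst sum.reindex) (auto simp: inj_on_def)
  also have "\<dots> = subdiv v (2 * q + 1)"
    unfolding subdiv_odd using reg(1) by (simp add: regular_row_def)
  finally show ?thesis .
qed

text \<open>Away from the irregular rows the subdivision commutes with index shifts, provided
  the data vanish wherever the shifted row would be irregular.\<close>
lemma subdiv_translate:
  assumes v': "\<And>i. v' i = v (i - s)"
    and reg: "\<And>q. (regular_row q \<and> regular_row (q + s)) \<or> (\<forall>j\<in>stencil n q. v j = 0)"
  shows "subdiv v' (m + 2 * s) = subdiv v m"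
proof -
  consider q where "m = 2 * q" | q where "m = 2 * q + 1" by (rule int_even_odd_cases)
  then show ?thesis
  proof cases
    case 1
    then have "m + 2 * s = 2 * (q + s)" by simp
    then show ?thesis unfolding 1 by (simp only: subdiv_even v') simp
  next
    case 2
    then have m: "m + 2 * s = 2 * (q + s) + 1" by simp
    show ?thesis
    proof (cases "regular_row q \<and> regular_row (q + s)")
      case True
      then have "subdiv v' (2 * (q + s) + 1) = subdiv v (2 * q + 1)"
        using subdiv_odd_regular_translate[where v' = v' and v = v, OF v'] by blast
      then show ?thesis by (simp only: m 2[symmetric])
    next
      case False
      then have "\<forall>j\<in>stencil n q. v j = 0" using reg by blast
      moreover have "j - s \<in> stencil n q" if "j \<in> stencil n (q + s)" for j
        using that by (auto simp: stencil_def)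
      ultimately have "subdiv v' (2 * (q + s) + 1) = subdiv v (2 * q + 1)"
        unfolding subdiv_odd by (simp add: v')
      then show ?thesis by (simp only: m 2[symmetric])
    qed
  qed
qed

lemma subdiv_iter_translate_right:
  assumes k: "k \<ge> 2 * int n"
  shows "subdiv_iter J (k + 1) (m + 2 ^ J) = subdiv_iter J k m"
proof (induction J arbitrary: m)
  case 0 then show ?case by (simp add: subdiv_iter_0)
next
  case (Suc J)
  have v': "subdiv_iter J (k + 1) i = subdiv_iter J k (i - 2 ^ J)" for i using Suc.IH[of "i - 2 ^ J"] by simp
  have reg: "(regular_row q \<and> regular_row (q + 2 ^ J)) \<or> (\<forall>j\<in>stencil n q. subdiv_iter J k j = 0)" for q
  proof (cases "q \<ge> int n - 1")
    case True
    have "q + 2 ^ J \<ge> int n - 1" using True zero_less_power[of "2::int" J] by linarith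
    then show ?thesis using regular_row_right True by blast
  next
    case False
    have "subdiv_iter J k j = 0" if j: "j \<in> stencil n q" for j
    proof (rule ccontr)
      assume "subdiv_iter J k j \<noteq> 0"
      then have lo: "2 ^ J * (k - halfwidth) + halfwidth \<le> j" using subdiv_iter_support by blast
      have "k - halfwidth \<ge> 1" using k by (simp add: halfwidth_def)
      then have "2 ^ J * (k - halfwidth) \<ge> 1" using le_pow2_mult[of "k - halfwidth" J] by linarith
      moreover have "j \<le> q + int n" using j by (simp add: stencil_def)
      ultimately show False using lo False halfwidth_def by linarith
    qed
    then show ?thesis by blast
  qed
  have "subdiv_iter (Suc J) (k + 1) (m + 2 ^ Suc J) = subdiv (subdiv_iter J (k + 1)) (m + 2 * 2 ^ J)"
    by (simp add: subdiv_iter_Suc)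
  also have "\<dots> = subdiv (subdiv_iter J k) m" by (rule subdiv_translate[OF v' reg])
  also have "\<dots> = subdiv_iter (Suc J) k m" by (simp add: subdiv_iter_Suc)
  finally show ?case .
qed

lemma subdiv_iter_translate_left:
  assumes k: "k \<le> - 2 * int n"
  shows "subdiv_iter J (k - 1) (m - 2 ^ J) = subdiv_iter J k m"
proof (induction J arbitrary: m)
  case 0 then show ?case by (simp add: subdiv_iter_0)
next
  case (Suc J)
  define s where "s = - ((2::int) ^ J)"
  have v': "subdiv_iter J (k - 1) i = subdiv_iter J k (i - s)" for i using Suc.IH[of "i + 2 ^ J"] by (simp add: s_def)
  have reg: "(regular_row q \<and> regular_row (q + s)) \<or> (\<forall>j\<in>stencil n q. subdiv_iter J k j = 0)" for q
  proof (cases "q + int n \<le> -1")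
    case True
    have "q + s + int n \<le> -1" using True zero_less_power[of "2::int" J] unfolding s_def by linarith
    then show ?thesis using regular_row_left True by blast
  next
    case False
    have "subdiv_iter J k j = 0" if j: "j \<in> stencil n q" for j
    proof (rule ccontr)
      assume "subdiv_iter J k j \<noteq> 0"
      then have hi: "j \<le> 2 ^ J * (k + halfwidth) - halfwidth" using subdiv_iter_support by blast
      have "- (k + halfwidth) \<ge> 1" using k by (simp add: halfwidth_def)
      then have "2 ^ J * (- (k + halfwidth)) \<ge> 1" using le_pow2_mult[of "- (k + halfwidth)" J] by linarith
      moreover have "2 ^ J * (- (k + halfwidth)) = - (2 ^ J * (k + halfwidth))" by (rule mult_minus_right)
      ultimately have "2 ^ J * (k + halfwidth) \<le> -1" by linarith
      moreover have "j \<ge> q - int n + 1" using j by (simp add: stencil_def)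
      ultimately show False using hi False halfwidth_def by linarith
    qed
    then show ?thesis by blast
  qed
  have "subdiv_iter (Suc J) (k - 1) (m - 2 ^ Suc J) = subdiv (subdiv_iter J (k - 1)) (m + 2 * s)"
    by (simp add: subdiv_iter_Suc s_def)
  also have "\<dots> = subdiv (subdiv_iter J k) m" by (rule subdiv_translate[OF v' reg])
  also have "\<dots> = subdiv_iter (Suc J) k m" by (simp add: subdiv_iter_Suc)
  finally show ?case .
qed

section \<open>Interpolants\<close>

definition node :: "nat \<Rightarrow> int \<Rightarrow> real" where "node J m = t m / 2 ^ J"

lemma node_strict_mono: "a < b \<Longrightarrow> node J a < node J b"
  unfolding node_def by (simp add: divide_strict_right_mono)

lemma node_le_iff[simp]: "node J a \<le> node J b \<longleftrightarrow> a \<le> b"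
  unfolding node_def by (simp add: divide_le_cancel)

lemma node_less_iff[simp]: "node J a < node J b \<longleftrightarrow> a < b"
  unfolding node_def by (simp add: divide_less_cancel)

lemma node_dyadic_scale: "node J (2 ^ J * m) = t m"
  unfolding node_def by (simp add: mesh_dyadic_scale)

lemma DD_interp_eq_pl_interp: "DD_interp n hl hr J k = pl_interp (node J) (subdiv_iter J k)"
  unfolding DD_interp_def node_def[abs_def] ..

lemma mesh_bracket: "\<exists>m. t m \<le> z \<and> z < t (m + 1)"
proof (cases "z \<ge> 0")
  case True
  define m where "m = \<lfloor>z / hr\<rfloor>"
  have m0: "m \<ge> 0" unfolding m_def using True hr_pos by simp
  have "real_of_int m \<le> z / hr" "z / hr < real_of_int m + 1" unfolding m_def by linarith+
  then have "real_of_int m * hr \<le> z" "z < (real_of_int m + 1) * hr" using hr_pos by (simp_all add: field_simps)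
  then show ?thesis using m0 by (intro exI[of _ m]) (simp add: mesh_nonneg)
next
  case False
  define m where "m = \<lfloor>z / hl\<rfloor>"
  have "z / hl < 0" using False hl_pos by (simp add: divide_neg_pos)
  then have m0: "m + 1 \<le> 0" unfolding m_def by linarith
  have "real_of_int m \<le> z / hl" "z / hl < real_of_int m + 1" unfolding m_def by linarith+
  then have "real_of_int m * hl \<le> z" "z < (real_of_int m + 1) * hl" using hl_pos by (simp_all add: field_simps)
  then show ?thesis using m0 by (intro exI[of _ m]) (simp add: mesh_nonpos)
qed

lemma node_bracket: "\<exists>m. node J m \<le> x \<and> x < node J (m + 1)"
proof -
  obtain m where "t m \<le> x * 2 ^ J" "x * 2 ^ J < t (m + 1)" using mesh_bracket by blast
  then show ?thesis unfolding node_def by (intro exI[of _ m]) (simp add: field_simps)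
qed

lemma DD_interp_eq:
  assumes "node J m \<le> x" "x < node J (m + 1)"
  shows "DD_interp n hl hr J k x = subdiv_iter J k m + (subdiv_iter J k (m + 1) - subdiv_iter J k m) * (x - node J m) / (node J (m + 1) - node J m)"
  unfolding DD_interp_eq_pl_interp by (rule pl_interp_eq[OF strict_monoI[OF node_strict_mono] assms])

lemma DD_interp_outside_support:
  assumes "x < t (k - halfwidth) \<or> t (k + halfwidth) \<le> x"
  shows "DD_interp n hl hr J k x = 0"
proof -
  obtain m where m: "node J m \<le> x" "x < node J (m + 1)" using node_bracket by blast
  have "subdiv_iter J k m = 0 \<and> subdiv_iter J k (m + 1) = 0"
  proof (cases "x < t (k - halfwidth)")
    case True
    have "m + 1 < 2 ^ J * (k - halfwidth) + halfwidth"
    proof (rule ccontr)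
      assume "\<not> ?thesis"
      then have "2 ^ J * (k - halfwidth) \<le> m" using halfwidth_pos by linarith
      then have "node J (2 ^ J * (k - halfwidth)) \<le> node J m" by simp
      then show False using True m unfolding node_dyadic_scale by linarith
    qed
    then show ?thesis using subdiv_iter_support by force
  next
    case False
    then have x: "t (k + halfwidth) \<le> x" using assms by simp
    have "m > 2 ^ J * (k + halfwidth) - halfwidth"
    proof (rule ccontr)
      assume "\<not> ?thesis"
      then have "m + 1 \<le> 2 ^ J * (k + halfwidth)" using halfwidth_pos by linarith
      then have "node J (m + 1) \<le> node J (2 ^ J * (k + halfwidth))" by simp
      then show False using x m unfolding node_dyadic_scale by linarith
    qed
    then show ?thesis using subdiv_iter_support by force
  qed
  then show ?thesis using DD_interp_eq[OF m] by simp
qed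

definition active :: "real \<Rightarrow> int set" where
  "active x = {k. t (k - halfwidth) \<le> x \<and> x < t (k + halfwidth)}"

lemma active_subset:
  assumes "t m0 \<le> x" "x < t (m0 + 1)"
  shows "active x \<subseteq> {m0 - halfwidth + 1 .. m0 + halfwidth}"
proof
  fix k assume "k \<in> active x"
  then have a: "t (k - halfwidth) \<le> x" "x < t (k + halfwidth)" by (auto simp: active_def)
  have "t (k - halfwidth) < t (m0 + 1)" using a assms by linarith
  moreover have "t m0 < t (k + halfwidth)" using a assms by linarith
  ultimately show "k \<in> {m0 - halfwidth + 1 .. m0 + halfwidth}" by simp
qed

lemma finite_active: "finite (active x)"
proof -
  obtain m0 where "t m0 \<le> x" "x < t (m0 + 1)" using mesh_bracket by blast
  then show ?thesis using active_subset finite_subset by blast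
qed

lemma card_active: "card (active x) \<le> 2 * nat halfwidth"
proof -
  obtain m0 where "t m0 \<le> x" "x < t (m0 + 1)" using mesh_bracket by blast
  then have "card (active x) \<le> card {m0 - halfwidth + 1 .. m0 + halfwidth}" using active_subset by (intro card_mono) auto
  also have "\<dots> = 2 * nat halfwidth" using halfwidth_pos by simp
  finally show ?thesis .
qed

lemma active_bounded: "\<exists>N. active x \<subseteq> {-N..N}"
proof -
  obtain m0 where "t m0 \<le> x" "x < t (m0 + 1)" using mesh_bracket by blast
  then have "active x \<subseteq> {m0 - halfwidth + 1 .. m0 + halfwidth}" by (rule active_subset)
  also have "\<dots> \<subseteq> {-(\<bar>m0\<bar> + halfwidth) .. \<bar>m0\<bar> + halfwidth}" using halfwidth_pos by auto
  finally show ?thesis by blast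
qed

lemma DD_interp_partition_of_unity: "(\<Sum>k\<in>active x. DD_interp n hl hr J k x) = 1"
proof -
  obtain m where m: "node J m \<le> x" "x < node J (m + 1)" using node_bracket by blast
  have s1: "{k. subdiv_iter J k m \<noteq> 0} \<subseteq> active x"
  proof
    fix k assume "k \<in> {k. subdiv_iter J k m \<noteq> 0}"
    then have b: "2 ^ J * (k - halfwidth) + halfwidth \<le> m" "m \<le> 2 ^ J * (k + halfwidth) - halfwidth" using subdiv_iter_support by auto
    have "node J (2 ^ J * (k - halfwidth)) \<le> node J m" using b halfwidth_pos by simp
    moreover have "node J (m + 1) \<le> node J (2 ^ J * (k + halfwidth))" using b halfwidth_pos by simp
    ultimately show "k \<in> active x" using m unfolding active_def node_dyadic_scale by auto
  qed
  have s2: "{k. subdiv_iter J k (m + 1) \<noteq> 0} \<subseteq> active x"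
  proof
    fix k assume "k \<in> {k. subdiv_iter J k (m + 1) \<noteq> 0}"
    then have b: "2 ^ J * (k - halfwidth) + halfwidth \<le> m + 1" "m + 1 \<le> 2 ^ J * (k + halfwidth) - halfwidth" using subdiv_iter_support by auto
    have "node J (2 ^ J * (k - halfwidth)) \<le> node J m" using b halfwidth_pos by simp
    moreover have "node J (m + 1) \<le> node J (2 ^ J * (k + halfwidth))" using b halfwidth_pos by simp
    ultimately show "k \<in> active x" using m unfolding active_def node_dyadic_scale by auto
  qed
  have p1: "(\<Sum>k\<in>active x. subdiv_iter J k m) = 1" by (rule subdiv_iter_partition_of_unity[OF finite_active s1])
  have p2: "(\<Sum>k\<in>active x. subdiv_iter J k (m + 1)) = 1" by (rule subdiv_iter_partition_of_unity[OF finite_active s2])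
  define th where "th = (x - node J m) / (node J (m + 1) - node J m)"
  have "(\<Sum>k\<in>active x. DD_interp n hl hr J k x) = (\<Sum>k\<in>active x. subdiv_iter J k m + (subdiv_iter J k (m + 1) - subdiv_iter J k m) * th)"
    using DD_interp_eq[OF m] unfolding th_def by (simp add: mult.assoc times_divide_eq_right)
  also have "\<dots> = (\<Sum>k\<in>active x. subdiv_iter J k m) + ((\<Sum>k\<in>active x. subdiv_iter J k (m + 1)) - (\<Sum>k\<in>active x. subdiv_iter J k m)) * th"
  proof -
    have "(\<Sum>k\<in>active x. (subdiv_iter J k (m + 1) - subdiv_iter J k m) * th) = (\<Sum>k\<in>active x. subdiv_iter J k (m + 1) - subdiv_iter J k m) * th"
      by (rule sum_distrib_right[symmetric])
    also have "\<dots> = ((\<Sum>k\<in>active x. subdiv_iter J k (m + 1)) - (\<Sum>k\<in>active x. subdiv_iter J k m)) * th"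
      by (simp only: sum_subtractf)
    finally show ?thesis by (simp only: sum.distrib)
  qed
  also have "\<dots> = 1" using p1 p2 by simp
  finally show ?thesis .
qed

lemma DD_interp_translate_right:
  assumes k: "k \<ge> 2 * int n"
  shows "DD_interp n hl hr J (k + 1) (x + hr) = DD_interp n hl hr J k x"
proof (cases "x < t (k - halfwidth)")
  case True
  have kc: "k - halfwidth \<ge> 0" "k + 1 - halfwidth \<ge> 0" using k by (simp_all add: halfwidth_def)
  have "t (k + 1 - halfwidth) = t (k - halfwidth) + hr" using kc by (simp add: mesh_nonneg algebra_simps)
  then have "x + hr < t (k + 1 - halfwidth)" using True by simp
  then show ?thesis using DD_interp_outside_support True by (metis diff_add_eq add.commute)
next
  case False
  have kc: "k - halfwidth \<ge> 1" using k by (simp add: halfwidth_def)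
  have "t (k - halfwidth) > 0" using kc hr_pos by (simp add: mesh_nonneg)
  then have x0: "x > 0" using False by simp
  obtain m where m: "node J m \<le> x" "x < node J (m + 1)" using node_bracket by blast
  have "node J 0 < node J (m + 1)" using m x0 by (simp add: node_def)
  then have m0: "m \<ge> 0" by simp
  have sh: "node J (i + 2 ^ J) = node J i + hr" if "i \<ge> 0" for i
    using that by (simp add: node_def mesh_nonneg field_simps)
  have m': "node J (m + 2 ^ J) \<le> x + hr" "x + hr < node J (m + 2 ^ J + 1)"
    using m sh[OF m0] sh[of "m + 1"] m0 by (simp_all add: algebra_simps)
  have "DD_interp n hl hr J (k + 1) (x + hr) = subdiv_iter J (k + 1) (m + 2 ^ J) + (subdiv_iter J (k + 1) (m + 2 ^ J + 1) - subdiv_iter J (k + 1) (m + 2 ^ J)) * (x + hr - node J (m + 2 ^ J)) / (node J (m + 2 ^ J + 1) - node J (m + 2 ^ J))"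
    by (rule DD_interp_eq[OF m'])
  also have "\<dots> = subdiv_iter J k m + (subdiv_iter J k (m + 1) - subdiv_iter J k m) * (x - node J m) / (node J (m + 1) - node J m)"
    using subdiv_iter_translate_right[OF k, of J m] subdiv_iter_translate_right[OF k, of J "m + 1"] sh[OF m0] sh[of "m + 1"] m0
    by (simp add: algebra_simps)
  also have "\<dots> = DD_interp n hl hr J k x" by (rule DD_interp_eq[OF m, symmetric])
  finally show ?thesis .
qed

lemma DD_interp_translate_left:
  assumes k: "k \<le> - 2 * int n"
  shows "DD_interp n hl hr J (k - 1) (x - hl) = DD_interp n hl hr J k x"
proof (cases "t (k + halfwidth) \<le> x")
  case True
  have kc: "k + halfwidth \<le> 0" "k - 1 + halfwidth \<le> 0" using k by (simp_all add: halfwidth_def)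
  have "t (k - 1 + halfwidth) = t (k + halfwidth) - hl" using kc by (simp add: mesh_nonpos algebra_simps)
  then have "t (k - 1 + halfwidth) \<le> x - hl" using True by simp
  then show ?thesis using DD_interp_outside_support True by (metis add.commute diff_add_eq)
next
  case False
  have kc: "k + halfwidth \<le> -1" using k by (simp add: halfwidth_def)
  have "t (k + halfwidth) < 0" using kc hl_pos by (simp add: mesh_nonpos mult_neg_pos)
  then have x0: "x < 0" using False by simp
  obtain m where m: "node J m \<le> x" "x < node J (m + 1)" using node_bracket by blast
  have "node J m < node J 0" using m x0 by (simp add: node_def)
  then have m0: "m + 1 \<le> 0" by simp
  have sh: "node J (i - 2 ^ J) = node J i - hl" if "i \<le> 0" for i
  proof -
    have "i - 2 ^ J \<le> 0" using that zero_less_power[of "2::int" J] by linarith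
    then show ?thesis using that by (simp add: node_def mesh_nonpos field_simps)
  qed
  have m': "node J (m - 2 ^ J) \<le> x - hl" "x - hl < node J (m - 2 ^ J + 1)"
    using m sh[of m] sh[OF m0] m0 by (simp_all add: algebra_simps)
  have "DD_interp n hl hr J (k - 1) (x - hl) = subdiv_iter J (k - 1) (m - 2 ^ J) + (subdiv_iter J (k - 1) (m - 2 ^ J + 1) - subdiv_iter J (k - 1) (m - 2 ^ J)) * (x - hl - node J (m - 2 ^ J)) / (node J (m - 2 ^ J + 1) - node J (m - 2 ^ J))"
    by (rule DD_interp_eq[OF m'])
  also have "\<dots> = subdiv_iter J k m + (subdiv_iter J k (m + 1) - subdiv_iter J k m) * (x - node J m) / (node J (m + 1) - node J m)"
    using subdiv_iter_translate_left[OF k, of J m] subdiv_iter_translate_left[OF k, of J "m + 1"] sh[of m] sh[OF m0] m0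
    by (simp add: algebra_simps)
  also have "\<dots> = DD_interp n hl hr J k x" by (rule DD_interp_eq[OF m, symmetric])
  finally show ?thesis .
qed

end

section \<open>Basic limit functions\<close>

locale dd_convergent_scheme = dd_scheme +
  assumes conv: "DD_convergent n hl hr"
    and integral_pos: "\<And>k. DD_D n hl hr k > 0"
begin

abbreviation "varphi \<equiv> DD_varphi n hl hr"
abbreviation "D \<equiv> DD_D n hl hr"
abbreviation "phi \<equiv> DD_phi n hl hr"

text \<open>\<open>DD_varphi\<close> is defined through \<open>lim\<close>; it is the uniform limit of the
  interpolants only because the scheme is assumed convergent.\<close>
lemma varphi_limit: "(\<lambda>J. DD_interp n hl hr J k x) \<longlonglongrightarrow> varphi k x"
  and continuous_varphi: "continuous_on UNIV (varphi k)"
proof -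
  obtain g where g: "continuous_on UNIV g" "uniform_limit UNIV (\<lambda>J. DD_interp n hl hr J k) g sequentially"
    using conv unfolding DD_convergent_def by blast
  have lim: "(\<lambda>J. DD_interp n hl hr J k y) \<longlonglongrightarrow> g y" for y
    using tendsto_uniform_limitI[OF g(2)] by simp
  have eq: "varphi k = g" unfolding DD_varphi_def using lim by (auto intro: limI)
  show "(\<lambda>J. DD_interp n hl hr J k x) \<longlonglongrightarrow> varphi k x" using lim eq by simp
  show "continuous_on UNIV (varphi k)" using g(1) eq by simp
qed

lemma varphi_outside_support: "x < t (k - halfwidth) \<or> t (k + halfwidth) \<le> x \<Longrightarrow> varphi k x = 0"
  using LIMSEQ_unique[OF varphi_limit[of k x]] DD_interp_outside_support by simp

lemma varphi_nonzero_active: "varphi k x \<noteq> 0 \<Longrightarrow> k \<in> active x"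
proof (rule ccontr)
  assume a: "varphi k x \<noteq> 0" and b: "k \<notin> active x"
  then have "x < t (k - halfwidth) \<or> t (k + halfwidth) \<le> x" by (auto simp: active_def)
  then show False using varphi_outside_support a by blast
qed

lemma varphi_partition_of_unity: "(\<Sum>k\<in>active x. varphi k x) = 1"
proof -
  have "(\<lambda>J. \<Sum>k\<in>active x. DD_interp n hl hr J k x) \<longlonglongrightarrow> (\<Sum>k\<in>active x. varphi k x)"
    by (intro tendsto_sum varphi_limit)
  then show ?thesis using DD_interp_partition_of_unity by (simp add: LIMSEQ_const_iff)
qed

lemma varphi_translate_right: "k \<ge> 2 * int n \<Longrightarrow> varphi (k + 1) (x + hr) = varphi k x"
  using LIMSEQ_unique[OF varphi_limit[of "k + 1" "x + hr"]] varphi_limit[of k x] DD_interp_translate_right by simp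

lemma varphi_translate_left: "k \<le> - 2 * int n \<Longrightarrow> varphi (k - 1) (x - hl) = varphi k x"
  using LIMSEQ_unique[OF varphi_limit[of "k - 1" "x - hl"]] varphi_limit[of k x] DD_interp_translate_left by simp

lemma varphi_measurable[measurable]: "varphi k \<in> borel_measurable borel"
  by (rule borel_measurable_continuous_onI[OF continuous_varphi])

lemma varphi_bounded: "\<exists>M\<ge>0. \<forall>x. \<bar>varphi k x\<bar> \<le> M"
proof -
  have "compact (varphi k ` {t (k - halfwidth) .. t (k + halfwidth)})"
    by (intro compact_continuous_image continuous_on_subset[OF continuous_varphi]) auto
  then obtain b where b: "b > 0" "\<forall>y\<in>varphi k ` {t (k - halfwidth) .. t (k + halfwidth)}. norm y \<le> b"
    using compact_imp_bounded bounded_pos by blast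
  have "\<bar>varphi k x\<bar> \<le> b" for x
  proof (cases "x \<in> {t (k - halfwidth) .. t (k + halfwidth)}")
    case True then show ?thesis using b by auto
  next
    case False
    then have "x < t (k - halfwidth) \<or> t (k + halfwidth) \<le> x" by auto
    then show ?thesis using varphi_outside_support b by simp
  qed
  then show ?thesis using b by (intro exI[of _ b]) auto
qed

lemma integrable_varphi: "integrable lborel (varphi k)"
proof -
  obtain M where M: "\<forall>x. \<bar>varphi k x\<bar> \<le> M" using varphi_bounded by blast
  show ?thesis
  proof (rule integrableI_bounded_set[where A="{t (k - halfwidth) .. t (k + halfwidth)}" and B=M])
    show "{t (k - halfwidth) .. t (k + halfwidth)} \<in> sets lborel" by simp
    show "emeasure lborel {t (k - halfwidth) .. t (k + halfwidth)} < \<infinity>" using halfwidth_pos by simp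
    show "varphi k \<in> borel_measurable lborel" by simp
    show "AE x\<in>{t (k - halfwidth) .. t (k + halfwidth)} in lborel. norm (varphi k x) \<le> M" using M by simp
    show "AE x in lborel. x \<notin> {t (k - halfwidth) .. t (k + halfwidth)} \<longrightarrow> varphi k x = 0"
      using varphi_outside_support by (intro always_eventually) (auto simp: not_le)
  qed
qed

lemma D_eq_integral: "D k = (LINT x|lborel. varphi k x)" by (simp add: DD_D_def)

lemma integrable_phi: "integrable lborel (phi k)" and integral_phi: "(LINT x|lborel. phi k x) = sqrt (D k)"
proof -
  show "integrable lborel (phi k)" unfolding DD_phi_def[abs_def] using integrable_varphi by simp
  have "(LINT x|lborel. phi k x) = D k / sqrt (D k)" unfolding DD_phi_def D_eq_integral by simp
  also have "\<dots> = sqrt (D k)" using integral_pos[of k] by (simp add: real_div_sqrt)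
  finally show "(LINT x|lborel. phi k x) = sqrt (D k)" .
qed

lemma phi_measurable[measurable]: "phi k \<in> borel_measurable borel"
  unfolding DD_phi_def[abs_def] by measurable

lemma phi_nonzero_active: "phi k x \<noteq> 0 \<Longrightarrow> k \<in> active x"
  using varphi_nonzero_active by (auto simp: DD_phi_def)

lemma D_translate_right: "k \<ge> 2 * int n \<Longrightarrow> D (k + 1) = D k"
proof -
  assume k: "k \<ge> 2 * int n"
  have "D (k + 1) = (LINT x|lborel. varphi (k + 1) (hr + 1 * x))"
    unfolding D_eq_integral using lborel_integral_real_affine[of 1 "varphi (k + 1)" hr] by simp
  also have "\<dots> = D k" unfolding D_eq_integral using varphi_translate_right[OF k] by (simp add: add.commute)
  finally show ?thesis .
qed

lemma D_translate_left: "k \<le> - 2 * int n \<Longrightarrow> D (k - 1) = D k"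
proof -
  assume k: "k \<le> - 2 * int n"
  have "D (k - 1) = (LINT x|lborel. varphi (k - 1) ((- hl) + 1 * x))"
    unfolding D_eq_integral using lborel_integral_real_affine[of 1 "varphi (k - 1)" "- hl"] by simp
  also have "\<dots> = D k" unfolding D_eq_integral using varphi_translate_left[OF k] by simp
  finally show ?thesis .
qed

lemma phi_translate_right: "k \<ge> 2 * int n \<Longrightarrow> phi (k + 1) (x + hr) = phi k x"
  using varphi_translate_right D_translate_right by (simp add: DD_phi_def)

lemma phi_translate_left: "k \<le> - 2 * int n \<Longrightarrow> phi (k - 1) (x - hl) = phi k x"
  using varphi_translate_left D_translate_left by (simp add: DD_phi_def)

lemma phi_right_regular: "phi (2 * int n + int d) x = phi (2 * int n) (x - real d * hr)"
proof (induction d arbitrary: x)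
  case 0 then show ?case by simp
next
  case (Suc d)
  have "phi (2 * int n + int (Suc d)) x = phi (2 * int n + int d + 1) ((x - hr) + hr)" by (simp add: ac_simps)
  also have "\<dots> = phi (2 * int n + int d) (x - hr)" by (rule phi_translate_right) simp
  also have "\<dots> = phi (2 * int n) (x - real (Suc d) * hr)" using Suc.IH by (simp add: algebra_simps)
  finally show ?case .
qed

lemma phi_left_regular: "phi (- 2 * int n - int d) x = phi (- 2 * int n) (x + real d * hl)"
proof (induction d arbitrary: x)
  case 0 then show ?case by simp
next
  case (Suc d)
  have "phi (- 2 * int n - int (Suc d)) x = phi (- 2 * int n - int d - 1) ((x + hl) - hl)" by (simp add: algebra_simps)
  also have "\<dots> = phi (- 2 * int n - int d) (x + hl)" by (rule phi_translate_left) simp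
  also have "\<dots> = phi (- 2 * int n) (x + real (Suc d) * hl)" using Suc.IH by (simp add: algebra_simps)
  finally show ?case .
qed

lemma phi_bounded: "\<exists>M\<ge>0. \<forall>x. \<bar>phi k x\<bar> \<le> M"
proof -
  obtain M where M: "M \<ge> 0" "\<forall>x. \<bar>varphi k x\<bar> \<le> M" using varphi_bounded by blast
  have "\<bar>phi k x\<bar> \<le> M / sqrt (D k)" for x
    using M integral_pos[of k] by (simp add: DD_phi_def abs_div divide_right_mono)
  then show ?thesis using M integral_pos[of k] by (intro exI[of _ "M / sqrt (D k)"]) auto
qed

lemma phi_eq_central_translate: "\<exists>k'\<in>{- 2 * int n .. 2 * int n}. \<exists>c. \<forall>x. phi k x = phi k' (x + c)"
proof -
  consider "k \<in> {- 2 * int n .. 2 * int n}" | "k > 2 * int n" | "k < - 2 * int n" by fastforce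
  then show ?thesis
  proof cases
    case 1
    then show ?thesis by (intro bexI[of _ k] exI[of _ 0]) auto
  next
    case 2
    then have "k = 2 * int n + int (nat (k - 2 * int n))" by simp
    then have "phi k x = phi (2 * int n) (x + - (real (nat (k - 2 * int n)) * hr))" for x
      using phi_right_regular by (metis diff_conv_add_uminus)
    then show ?thesis
      by (intro bexI[of _ "2 * int n"] exI[of _ "- (real (nat (k - 2 * int n)) * hr)"]) auto
  next
    case 3
    then have "k = - 2 * int n - int (nat (- 2 * int n - k))" by simp
    then have "phi k x = phi (- 2 * int n) (x + real (nat (- 2 * int n - k)) * hl)" for x
      using phi_left_regular by metis
    then show ?thesis
      by (intro bexI[of _ "- 2 * int n"] exI[of _ "real (nat (- 2 * int n - k)) * hl"]) auto
  qed
qed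

lemma phi_uniformly_bounded: "\<exists>M\<ge>0. \<forall>k x. \<bar>phi k x\<bar> \<le> M"
proof -
  obtain Mk where Mk: "\<And>k x. \<bar>phi k x\<bar> \<le> Mk k"
    using phi_bounded by metis
  define M where "M = Max (Mk ` {- 2 * int n .. 2 * int n})"
  have "\<bar>phi k x\<bar> \<le> M" for k x
  proof -
    obtain k' c where k': "k' \<in> {- 2 * int n .. 2 * int n}" "\<And>x. phi k x = phi k' (x + c)"
      using phi_eq_central_translate by blast
    then have "Mk k' \<le> M"
      unfolding M_def by (intro Max_ge) auto
    then show ?thesis using Mk[of k' "x + c"] k'(2) by simp
  qed
  moreover have "M \<ge> 0"
    using calculation[of 0 0] abs_ge_zero order_trans by blast
  ultimately show ?thesis by blast
qed

end

section \<open>The kernel \<open>\<Phi>(x)\<^sup>T S \<Phi>(y)\<close>\<close>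

locale dd_kernel = dd_convergent_scheme +
  fixes Q U :: "nat \<Rightarrow> nat \<Rightarrow> real"
  assumes QR: "is_QR n hl hr Q U"
begin

abbreviation "S \<equiv> DD_S n hl hr Q"
abbreviation "Kern \<equiv> DD_kernel n hl hr Q"

definition N_irr :: nat where "N_irr = 4 * n - 3"

lemma N_irr_ge: "n \<le> N_irr" "0 < N_irr" using n_pos by (simp_all add: N_irr_def)

lemma Q_orthonormal_columns: "i < N_irr \<Longrightarrow> j < N_irr \<Longrightarrow> (\<Sum>l<N_irr. Q l i * Q l j) = (if i = j then 1 else 0)"
  using QR unfolding is_QR_def N_irr_def Let_def by blast

lemma Q_orthonormal_rows: "i < N_irr \<Longrightarrow> j < N_irr \<Longrightarrow> (\<Sum>l<N_irr. Q i l * Q j l) = (if i = j then 1 else 0)"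
  using QR unfolding is_QR_def N_irr_def Let_def by blast

lemma U_upper_triangular: "i < N_irr \<Longrightarrow> \<alpha> < n \<Longrightarrow> \<alpha> < i \<Longrightarrow> U i \<alpha> = 0"
  using QR unfolding is_QR_def N_irr_def Let_def by blast

lemma C_eq_QU: "i < N_irr \<Longrightarrow> \<alpha> < n \<Longrightarrow> DD_C n hl hr i \<alpha> = (\<Sum>l<N_irr. Q i l * U l \<alpha>)"
  using QR unfolding is_QR_def N_irr_def Let_def by blast

definition irr_pos :: "int \<Rightarrow> nat" where "irr_pos k = nat (k - (2 - 2 * int n))"

lemma irr_pos_bounds: "k \<in> irr_set n \<Longrightarrow> irr_pos k < N_irr \<and> irr_idx n (irr_pos k) = k"
  unfolding irr_set_def irr_pos_def N_irr_def irr_idx_def using n_pos by auto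

lemma bij_irr_pos: "bij_betw irr_pos (irr_set n) {..<N_irr}"
proof (rule bij_betw_byWitness[where f'="irr_idx n"])
  show "\<forall>a\<in>irr_set n. irr_idx n (irr_pos a) = a" using irr_pos_bounds by blast
  show "\<forall>a'\<in>{..<N_irr}. irr_pos (irr_idx n a') = a'" unfolding irr_pos_def irr_idx_def by auto
  show "irr_pos ` irr_set n \<subseteq> {..<N_irr}" using irr_pos_bounds by auto
  show "irr_idx n ` {..<N_irr} \<subseteq> irr_set n" unfolding irr_idx_def irr_set_def N_irr_def using n_pos by auto
qed

lemma S_eq: "S k m = (if hl \<noteq> hr \<and> k \<in> irr_set n \<and> m \<in> irr_set n then (\<Sum>l<n. Q (irr_pos k) l * Q (irr_pos m) l) else (if k = m then 1 else 0))"
  unfolding DD_S_def irr_pos_def ..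

lemma S_nonzero: "S k m \<noteq> 0 \<Longrightarrow> m = k \<or> (k \<in> irr_set n \<and> m \<in> irr_set n)"
  unfolding S_eq by (auto split: if_splits)

lemma abs_S_le_one: "\<bar>S k m\<bar> \<le> 1"
proof (cases "hl \<noteq> hr \<and> k \<in> irr_set n \<and> m \<in> irr_set n")
  case True
  have a: "irr_pos k < N_irr" "irr_pos m < N_irr" using True irr_pos_bounds by auto
  have "\<bar>\<Sum>l<n. Q (irr_pos k) l * Q (irr_pos m) l\<bar> \<le> (\<Sum>l<n. \<bar>Q (irr_pos k) l * Q (irr_pos m) l\<bar>)" by (rule sum_abs)
  also have "\<dots> \<le> (\<Sum>l<n. ((Q (irr_pos k) l)\<^sup>2 + (Q (irr_pos m) l)\<^sup>2) / 2)"
    by (intro sum_mono abs_mult_le_sum_squares)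
  also have "\<dots> \<le> (\<Sum>l<N_irr. ((Q (irr_pos k) l)\<^sup>2 + (Q (irr_pos m) l)\<^sup>2) / 2)"
    using N_irr_ge by (intro sum_mono2) auto
  also have "\<dots> = ((\<Sum>l<N_irr. Q (irr_pos k) l * Q (irr_pos k) l) + (\<Sum>l<N_irr. Q (irr_pos m) l * Q (irr_pos m) l)) / 2"
    unfolding sum_divide_distrib[symmetric] sum.distrib[symmetric] by (simp add: power2_eq_square)
  also have "\<dots> = 1" using Q_orthonormal_rows[OF a(1) a(1)] Q_orthonormal_rows[OF a(2) a(2)] by simp
  finally show ?thesis using True unfolding S_eq by simp
next
  case False then show ?thesis unfolding S_eq by auto
qed

lemma sqrt_D_eq_QU: "i < N_irr \<Longrightarrow> sqrt (D (irr_idx n i)) = Q i 0 * U 0 0"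
proof -
  assume i: "i < N_irr"
  have "sqrt (D (irr_idx n i)) = DD_C n hl hr i 0" by (simp add: DD_C_def DD_c_def)
  also have "\<dots> = (\<Sum>l<N_irr. Q i l * U l 0)" using C_eq_QU[OF i] n_pos by simp
  also have "\<dots> = Q i 0 * U 0 0"
  proof -
    have "(\<Sum>l<N_irr. Q i l * U l 0) = (\<Sum>l\<in>{0}. Q i l * U l 0)"
      using N_irr_ge n_pos U_upper_triangular by (intro sum.mono_neutral_right) auto
    then show ?thesis by simp
  qed
  finally show ?thesis .
qed

text \<open>On the irregular block, \<open>(\<surd>D\<^sub>k)\<^sub>k\<close> is the column \<open>c\<^sub>0 = U\<^sub>0\<^sub>0 Q\<^sub>\<cdot>\<^sub>0\<close> of
  \<open>C = Q U\<close>, which the projection \<open>Q\<^sub>n Q\<^sub>n\<^sup>T\<close> onto the first \<open>n\<close> columns of \<open>Q\<close> fixes.\<close>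
lemma S_fixes_sqrt_D:
  assumes M: "finite M" "k \<in> M" "irr_set n \<subseteq> M"
  shows "(\<Sum>m\<in>M. S k m * sqrt (D m)) = sqrt (D k)"
proof (cases "hl \<noteq> hr \<and> k \<in> irr_set n")
  case False
  then have "S k m = (if k = m then 1 else 0)" for m unfolding S_eq by auto
  then have "(\<Sum>m\<in>M. S k m * sqrt (D m)) = (\<Sum>m\<in>M. if k = m then sqrt (D m) else 0)"
    by (intro sum.cong) auto
  also have "\<dots> = sqrt (D k)" using M by (simp add: sum.delta)
  finally show ?thesis .
next
  case True
  have a: "irr_pos k < N_irr" using True irr_pos_bounds by auto
  have "(\<Sum>m\<in>M. S k m * sqrt (D m)) = (\<Sum>m\<in>irr_set n. S k m * sqrt (D m))"
  proof (rule sum.mono_neutral_right[OF M(1) M(3)])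
    show "\<forall>m\<in>M - irr_set n. S k m * sqrt (D m) = 0"
      using True unfolding S_eq by auto
  qed
  also have "\<dots> = (\<Sum>m\<in>irr_set n. (\<Sum>l<n. Q (irr_pos k) l * Q (irr_pos m) l) * (Q (irr_pos m) 0 * U 0 0))"
  proof (intro sum.cong refl)
    fix m assume m: "m \<in> irr_set n"
    then have "sqrt (D m) = Q (irr_pos m) 0 * U 0 0" using sqrt_D_eq_QU[of "irr_pos m"] irr_pos_bounds[OF m] by simp
    then show "S k m * sqrt (D m) = (\<Sum>l<n. Q (irr_pos k) l * Q (irr_pos m) l) * (Q (irr_pos m) 0 * U 0 0)"
      using True m unfolding S_eq by simp
  qed
  also have "\<dots> = (\<Sum>b<N_irr. (\<Sum>l<n. Q (irr_pos k) l * Q b l) * (Q b 0 * U 0 0))"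
    using sum.reindex_bij_betw[OF bij_irr_pos, of "\<lambda>b. (\<Sum>l<n. Q (irr_pos k) l * Q b l) * (Q b 0 * U 0 0)"] by simp
  also have "\<dots> = (\<Sum>l<n. Q (irr_pos k) l * U 0 0 * (\<Sum>b<N_irr. Q b l * Q b 0))"
    by (simp add: sum_distrib_left sum_distrib_right sum.swap[of _ "{..<N_irr}"] algebra_simps)
  also have "\<dots> = (\<Sum>l<n. Q (irr_pos k) l * U 0 0 * (if l = 0 then 1 else 0))"
    using N_irr_ge by (intro sum.cong refl) (simp add: Q_orthonormal_columns)
  also have "\<dots> = (\<Sum>l<n. if l = 0 then Q (irr_pos k) l * U 0 0 else 0)" by (intro sum.cong) auto
  also have "\<dots> = Q (irr_pos k) 0 * U 0 0" using n_pos by (simp add: sum.delta)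
  also have "\<dots> = sqrt (D k)" using sqrt_D_eq_QU[OF a] irr_pos_bounds True by simp
  finally show ?thesis .
qed

lemma Kern_finite_sum:
  assumes A: "finite A" and B: "finite B"
    and sub: "\<And>k m. phi k x * S k m * phi m y \<noteq> 0 \<Longrightarrow> k \<in> A \<and> m \<in> B"
  shows "Kern x y = (\<Sum>k\<in>A. \<Sum>m\<in>B. phi k x * S k m * phi m y)"
proof -
  define g where "g = (\<lambda>(k, m). phi k x * S k m * phi m y)"
  have "Kern x y = infsum g UNIV" unfolding DD_kernel_def g_def ..
  also have "\<dots> = infsum g (A \<times> B)"
    by (rule infsum_cong_neutral) (use sub in \<open>auto simp: g_def\<close>)
  also have "\<dots> = sum g (A \<times> B)" using A B by (simp add: infsum_finite)
  also have "\<dots> = (\<Sum>k\<in>A. \<Sum>m\<in>B. phi k x * S k m * phi m y)"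
    by (simp add: sum.cartesian_product g_def)
  finally show ?thesis .
qed

lemma finite_irr_set: "finite (irr_set n)" by (simp add: irr_set_def)

lemma Kern_eq_sum_irr: "Kern x y = (\<Sum>k\<in>active x. \<Sum>m\<in>active x \<union> irr_set n. phi k x * S k m * phi m y)"
proof (rule Kern_finite_sum)
  show "finite (active x)" by (rule finite_active)
  show "finite (active x \<union> irr_set n)" using finite_active finite_irr_set by simp
  fix k m assume ne: "phi k x * S k m * phi m y \<noteq> 0"
  then have k: "k \<in> active x" using phi_nonzero_active by force
  have "S k m \<noteq> 0" using ne by force
  then have "m = k \<or> m \<in> irr_set n" using S_nonzero by blast
  then show "k \<in> active x \<and> m \<in> active x \<union> irr_set n" using k by auto
qed

lemma Kern_row_integral: "(LINT y|lborel. Kern x y) = 1"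
proof -
  define M where "M = active x \<union> irr_set n"
  have fM: "finite M" unfolding M_def using finite_active finite_irr_set by simp
  have e: "Kern x = (\<lambda>y. \<Sum>k\<in>active x. \<Sum>m\<in>M. phi k x * S k m * phi m y)"
    using Kern_eq_sum_irr unfolding M_def by (intro ext) simp
  have "(LINT y|lborel. Kern x y) = (\<Sum>k\<in>active x. \<Sum>m\<in>M. phi k x * S k m * (LINT y|lborel. phi m y))"
    unfolding e
    by (simp add: Bochner_Integration.integral_sum Bochner_Integration.integrable_sum integrable_mult_right integrable_phi)
  also have "\<dots> = (\<Sum>k\<in>active x. phi k x * (\<Sum>m\<in>M. S k m * sqrt (D m)))"
    by (simp add: integral_phi sum_distrib_left mult.assoc)
  also have "\<dots> = (\<Sum>k\<in>active x. phi k x * sqrt (D k))"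
  proof (intro sum.cong refl)
    fix k assume "k \<in> active x"
    then show "phi k x * (\<Sum>m\<in>M. S k m * sqrt (D m)) = phi k x * sqrt (D k)"
      using S_fixes_sqrt_D[OF fM] unfolding M_def by auto
  qed
  also have "\<dots> = (\<Sum>k\<in>active x. varphi k x)"
  proof (intro sum.cong refl)
    fix k
    have "sqrt (D k) \<noteq> 0" using integral_pos[of k] by simp
    then show "phi k x * sqrt (D k) = varphi k x" by (simp add: DD_phi_def)
  qed
  also have "\<dots> = 1" by (rule varphi_partition_of_unity)
  finally show ?thesis .
qed

text \<open>\<open>\<phi>\<^sub>k\<close> lives on \<open>[t(k - halfwidth), t(k + halfwidth)]\<close>, and \<open>S\<close> only couples indices of
  the irregular block, which are less than \<open>4n\<close> apart.\<close>
definition kernel_radius :: real where "kernel_radius = (real (4 * n) + 2 * real_of_int halfwidth) * hmax"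

lemma Kern_eq_active_sum: "Kern x y = (\<Sum>k\<in>active x. \<Sum>m\<in>active y. phi k x * S k m * phi m y)"
proof (rule Kern_finite_sum)
  show "finite (active x)" "finite (active y)" by (rule finite_active)+
  fix k m assume ne: "phi k x * S k m * phi m y \<noteq> 0"
  then show "k \<in> active x \<and> m \<in> active y" using phi_nonzero_active by force
qed

lemma Kern_bounded: "\<exists>B. \<forall>x y. \<bar>Kern x y\<bar> \<le> B"
proof -
  obtain M where M: "M \<ge> 0" "\<And>k x. \<bar>phi k x\<bar> \<le> M" using phi_uniformly_bounded by blast
  have "\<bar>Kern x y\<bar> \<le> real (2 * nat halfwidth) * real (2 * nat halfwidth) * (M * M)" for x y
  proof -
    have "\<bar>Kern x y\<bar> \<le> (\<Sum>k\<in>active x. \<Sum>m\<in>active y. \<bar>phi k x * S k m * phi m y\<bar>)"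
      unfolding Kern_eq_active_sum by (rule order.trans[OF sum_abs sum_mono[OF sum_abs]])
    also have "\<dots> \<le> (\<Sum>k\<in>active x. \<Sum>m\<in>active y. M * M)"
    proof (intro sum_mono)
      fix k m
      have "\<bar>phi k x * S k m * phi m y\<bar> = \<bar>phi k x\<bar> * \<bar>S k m\<bar> * \<bar>phi m y\<bar>" by (simp add: abs_mult)
      also have "\<dots> \<le> M * 1 * M" using M abs_S_le_one by (intro mult_mono) auto
      finally show "\<bar>phi k x * S k m * phi m y\<bar> \<le> M * M" by simp
    qed
    also have "\<dots> = real (card (active x)) * real (card (active y)) * (M * M)" by simp
    also have "\<dots> \<le> real (2 * nat halfwidth) * real (2 * nat halfwidth) * (M * M)"
    proof -
      have c1: "real (card (active x)) \<le> real (2 * nat halfwidth)" using card_active by (simp only: of_nat_le_iff)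
      have c2: "real (card (active y)) \<le> real (2 * nat halfwidth)" using card_active by (simp only: of_nat_le_iff)
      have "real (card (active x)) * real (card (active y)) \<le> real (2 * nat halfwidth) * real (2 * nat halfwidth)"
        using c1 c2 by (intro mult_mono) auto
      then show ?thesis using M by (intro mult_right_mono) auto
    qed
    finally show ?thesis .
  qed
  then show ?thesis by blast
qed

lemma Kern_local: "kernel_radius < \<bar>x - y\<bar> \<Longrightarrow> Kern x y = 0"
proof -
  assume far: "kernel_radius < \<bar>x - y\<bar>"
  have "phi k x * S k m * phi m y = 0" for k m
  proof (rule ccontr)
    assume ne: "phi k x * S k m * phi m y \<noteq> 0"
    then have k: "k \<in> active x" and m: "m \<in> active y" using phi_nonzero_active by force+
    have "S k m \<noteq> 0" using ne by force
    then have km: "m = k \<or> (k \<in> irr_set n \<and> m \<in> irr_set n)" using S_nonzero by blast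
    have kx: "t (k - halfwidth) \<le> x" "x < t (k + halfwidth)" using k by (auto simp: active_def)
    have my: "t (m - halfwidth) \<le> y" "y < t (m + halfwidth)" using m by (auto simp: active_def)
    have H0: "hmax \<ge> 0" using hmax_pos by simp
    have "\<bar>x - y\<bar> \<le> kernel_radius"
    proof (cases "m = k")
      case True
      have d: "t (k + halfwidth) - t (k - halfwidth) \<le> real_of_int (2 * halfwidth) * hmax"
        using mesh_diff_le[of "k - halfwidth" "k + halfwidth"] halfwidth_pos by simp
      have "real_of_int (2 * halfwidth) * hmax \<le> kernel_radius" unfolding kernel_radius_def using H0 by (intro mult_right_mono) auto
      then show ?thesis using kx my[unfolded True] d by linarith
    next
      case False
      then have irr: "k \<in> irr_set n" "m \<in> irr_set n" using km by auto
      have lo: "t (2 - 2 * int n - halfwidth) \<le> t (k - halfwidth)" "t (2 - 2 * int n - halfwidth) \<le> t (m - halfwidth)"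
        using irr by (auto simp: irr_set_def)
      have hi: "t (k + halfwidth) \<le> t (2 * int n - 2 + halfwidth)" "t (m + halfwidth) \<le> t (2 * int n - 2 + halfwidth)"
        using irr by (auto simp: irr_set_def)
      have d: "t (2 * int n - 2 + halfwidth) - t (2 - 2 * int n - halfwidth) \<le> real_of_int (4 * int n - 4 + 2 * halfwidth) * hmax"
        using mesh_diff_le[of "2 - 2 * int n - halfwidth" "2 * int n - 2 + halfwidth"] n_pos halfwidth_pos by (simp add: algebra_simps)
      have "real_of_int (4 * int n - 4 + 2 * halfwidth) * hmax \<le> kernel_radius" unfolding kernel_radius_def using H0 by (intro mult_right_mono) auto
      then show ?thesis using kx my lo hi d by linarith
    qed
    then show False using far by simp
  qed
  then show "Kern x y = 0" unfolding Kern_eq_active_sum by (intro sum.neutral ballI) blast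
qed

lemma kernel_radius_pos: "kernel_radius > 0"
  unfolding kernel_radius_def using hmax_pos n_pos halfwidth_pos by (intro mult_pos_pos) auto

lemma Kern_measurable: "(\<lambda>p. Kern (fst p) (snd p)) \<in> borel_measurable (lborel \<Otimes>\<^sub>M lborel)"
proof (rule borel_measurable_LIMSEQ_real)
  define u where "u = (\<lambda>(i::nat) p. \<Sum>k\<in>{- int i .. int i}. \<Sum>m\<in>{- int i .. int i}. phi k (fst p) * S k m * phi m (snd p))"
  show "\<And>i. u i \<in> borel_measurable (lborel \<Otimes>\<^sub>M lborel)" unfolding u_def by measurable
  fix p :: "real \<times> real"
  obtain N1 where N1: "active (fst p) \<subseteq> {-N1..N1}" using active_bounded by blast
  obtain N2 where N2: "active (snd p) \<subseteq> {-N2..N2}" using active_bounded by blast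
  have "eventually (\<lambda>i. u i p = Kern (fst p) (snd p)) sequentially"
    unfolding eventually_sequentially
  proof (intro exI[of _ "nat (max N1 N2)"] allI impI)
    fix i assume i: "i \<ge> nat (max N1 N2)"
    show "u i p = Kern (fst p) (snd p)" unfolding u_def
    proof (rule Kern_finite_sum[symmetric])
      show "finite {- int i .. int i}" by simp
      show "finite {- int i .. int i}" by simp
      fix k m assume ne: "phi k (fst p) * S k m * phi m (snd p) \<noteq> 0"
      then have "k \<in> active (fst p)" "m \<in> active (snd p)" using phi_nonzero_active by force+
      then have "k \<in> {-N1..N1}" "m \<in> {-N2..N2}" using N1 N2 by auto
      then show "k \<in> {- int i .. int i} \<and> m \<in> {- int i .. int i}" using i by auto
    qed
  qed
  then show "(\<lambda>i. u i p) \<longlonglongrightarrow> Kern (fst p) (snd p)" by (rule tendsto_eventually)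
qed

end

theorem proposition3:
  fixes n :: nat and hl hr :: real
    and Q U :: "nat \<Rightarrow> nat \<Rightarrow> real"
  assumes n_pos: "n \<ge> 1"
    and hl_pos: "hl > 0" and hr_pos: "hr > 0"
    and conv: "DD_convergent n hl hr"
    and int_pos: "\<forall>k. DD_D n hl hr k > 0"
    and QR: "is_QR n hl hr Q U"
  shows "(\<exists>C>0. \<forall>f\<in>L2. DD_form n hl hr Q 0 f \<le> C * L2_norm_sq f) \<and>
         (\<forall>f\<in>L2. ((\<lambda>j. DD_form n hl hr Q j f) \<longlongrightarrow> 0) at_bot \<and>
                  ((\<lambda>j. DD_form n hl hr Q j f) \<longlongrightarrow> L2_norm_sq f) at_top)"
proof -
  interpret dd_kernel n hl hr Q U
    using assms by unfold_locales auto
  obtain B where B: "\<And>x y. \<bar>DD_kernel n hl hr Q x y\<bar> \<le> B"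
    using Kern_bounded by blast
  interpret averaging_kernel "DD_kernel n hl hr Q" B kernel_radius
    using Kern_measurable B kernel_radius_pos Kern_local Kern_row_integral
    by unfold_locales auto
  have form: "DD_form n hl hr Q j f = dilated_form (2 powr real_of_int j) f f" for j f
    unfolding DD_form_def dilated_form_def ..
  show ?thesis
    unfolding form
  proof (intro conjI ballI exI[of _ "2 * B * kernel_radius + 1"])
    show "0 < 2 * B * kernel_radius + 1"
      using bound_nonneg kernel_radius_pos by (simp add: add_nonneg_pos)
    fix f assume f: "f \<in> L2"
    show "dilated_form (2 powr real_of_int 0) f f \<le> (2 * B * kernel_radius + 1) * L2_norm_sq f"
      using dilated_form_at_one_bound[OF f] L2_norm_sq_nonneg[of f] by (simp add: algebra_simps)
    show "((\<lambda>j. dilated_form (2 powr real_of_int j) f f) \<longlongrightarrow> 0) at_bot"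
      using filterlim_compose[OF dilated_form_tendsto_zero[OF f] filterlim_dyadic_at_bot] by (simp add: o_def)
    show "((\<lambda>j. dilated_form (2 powr real_of_int j) f f) \<longlongrightarrow> L2_norm_sq f) at_top"
      using filterlim_compose[OF dilated_form_tendsto_norm[OF f] filterlim_dyadic_at_top] by (simp add: o_def)
  qed
qed

end
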